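(* Consider the problem $$(\mathrm{CP})\qquad\inf_{\mathbf x\in\mathbb R^n}\{f(\mathbf x): g_i(\mathbf x)\le0,\ i=1,\dots,m\},$$ where $f=s_0+p_0$ and $g_i=s_i+p_i$ ($i=1,\dots,m$) are convex polynomials such that, for each $i=0,1,\dots,m$, $s_i(\mathbf x)=\sum_{j=1}^n u_i^j(x_j)$ with each $u_i^j$ a convex univariate polynomial in $x_j$ of degree at most $2d_j$, and $p_i$ is an SOS-convex polynomial of degree at most $2r$. Let $d_0:=\max_{1\le j\le n}d_j$ and assume $d_0>r$ and that $f$ is bounded from below on the feasible set $\mathbf F=\{\mathbf x: g_i(\mathbf x)\le0,\ i=1,\dots,m\}$. Assume there exists $\widehat{\mathbf x}\in\mathbf F$ with $g_i(\widehat{\mathbf x})<0$ for all $i=1,\dots,m$. Then, with the problems $(\mathrm D^{\mathrm{SPLD}}_{\mathrm{sos}})$ and $(\widetilde{\mathrm D}^{\mathrm{SPLD}}_{\mathrm{sos}})$ defined in the context, $$\mathrm{val}(\mathrm{CP})=\mathrm{val}(\mathrm D^{\mathrm{SPLD}}_{\mathrm{sos}})=\mathrm{val}(\widetilde{\mathrm D}^{\mathrm{SPLD}}_{\mathrm{sos}}),$$ and $(\mathrm D^{\mathrm{SPLD}}_{\mathrm{sos}})$ has an optimal solution.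
   Context: A polynomial is SOS-convex if its Hessian is an SOS matrix polynomial, i.e., $\nabla^2 p(\mathbf x)=F(\mathbf x)^TF(\mathbf x)$ for some matrix polynomial $F$. $\Sigma[\mathbf x]_r$: sums of squares of polynomials in $\mathbf x$ of degree $\le 2r$; $\Sigma[x_j]_{d}$: SOS univariate polynomials in $x_j$ of degree $\le 2d$. $\mathbb N^n_d=\{\boldsymbol\alpha\in\mathbb N^n:|\boldsymbol\alpha|\le d\}$; $\lceil\mathbf x\rceil_r=(\mathbf x^{\boldsymbol\alpha})_{\boldsymbol\alpha\in\mathbb N^n_r}$, of length $s(n,r)=\binom{n+r}{r}$; $\lceil x_j\rceil_{d}=(1,x_j,\dots,x_j^{d})^T$; $(M)_{\boldsymbol\alpha}$ is the coefficient matrix of $\mathbf x^{\boldsymbol\alpha}$ in a polynomial matrix $M$, and $h_{\boldsymbol\alpha}$ the coefficient of $\mathbf x^{\boldsymbol\alpha}$ in a polynomial $h$. $(\mathrm D^{\mathrm{SPLD}}_{\mathrm{sos}})$: maximize $\mu$ over $\mu\in\mathbb R$, $\lambda_i\ge0$ ($i=1,\dots,m$), $\sigma\in\Sigma[\mathbf x]_r$, $\sigma_j\in\Sigma[x_j]_{d_j}$ ($j=1,\dots,n$), subject to the polynomial identity $f+\sum_{i=1}^m\lambda_ig_i-\mu=\sigma+\sum_{j=1}^n\sigma_j$. $(\widetilde{\mathrm D}^{\mathrm{SPLD}}_{\mathrm{sos}})$: minimize $\sum_{\boldsymbol\alpha\in\mathbb N^n_{2d_0}}f_{\boldsymbol\alpha}y_{\boldsymbol\alpha}$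 over $\mathbf y=(y_{\boldsymbol\alpha})_{\boldsymbol\alpha\in\mathbb N^n_{2d_0}}\in\mathbb R^{s(n,2d_0)}$ subject to $\sum_{\boldsymbol\alpha\in\mathbb N^n_{2d_0}}(g_i)_{\boldsymbol\alpha}y_{\boldsymbol\alpha}\le0$, $i=1,\dots,m$; $\sum_{\boldsymbol\alpha\in\mathbb N^n_{2d_0}}y_{\boldsymbol\alpha}(\lceil x_j\rceil_{d_j}\lceil x_j\rceil_{d_j}^T)_{\boldsymbol\alpha}\succeq0$, $j=1,\dots,n$; $\sum_{\boldsymbol\alpha\in\mathbb N^n_{2d_0}}y_{\boldsymbol\alpha}(\lceil\mathbf x\rceil_r\lceil\mathbf x\rceil_r^T)_{\boldsymbol\alpha}\succeq0$; $y_{\mathbf 0}=1$. *)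

theory Defs
  imports "HOL-Analysis.Analysis" "HOL-Computational_Algebra.Polynomial"
begin

text \<open>Multivariate real polynomials in the variables x$j (j :: 'n, n = CARD('n))
  are represented by coefficient functions c :: ('n \<Rightarrow> nat) \<Rightarrow> real,
  exponent vectors alpha :: 'n \<Rightarrow> nat.\<close>

definition exps :: "nat \<Rightarrow> ('n::finite \<Rightarrow> nat) set" where
  "exps D = {\<alpha>. sum \<alpha> UNIV \<le> D}"

definition mon :: "('n::finite \<Rightarrow> nat) \<Rightarrow> real^'n \<Rightarrow> real" where
  "mon \<alpha> x = (\<Prod>j\<in>UNIV. (x $ j) ^ (\<alpha> j))"

definition is_mpoly :: "(('n::finite \<Rightarrow> nat) \<Rightarrow> real) \<Rightarrow> bool" where
  "is_mpoly c \<longleftrightarrow> finite {\<alpha>. c \<alpha> \<noteq> 0}"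

definition mpoly_deg_le :: "nat \<Rightarrow> (('n::finite \<Rightarrow> nat) \<Rightarrow> real) \<Rightarrow> bool" where
  "mpoly_deg_le D c \<longleftrightarrow> (\<forall>\<alpha>. c \<alpha> \<noteq> 0 \<longrightarrow> \<alpha> \<in> exps D)"

definition peval :: "(('n::finite \<Rightarrow> nat) \<Rightarrow> real) \<Rightarrow> real^'n \<Rightarrow> real" where
  "peval c x = (\<Sum>\<alpha>\<in>{\<alpha>. c \<alpha> \<noteq> 0}. c \<alpha> * mon \<alpha> x)"

definition pdiff :: "'n \<Rightarrow> (('n::finite \<Rightarrow> nat) \<Rightarrow> real) \<Rightarrow> ('n \<Rightarrow> nat) \<Rightarrow> real" where
  "pdiff j c = (\<lambda>\<alpha>. real (\<alpha> j + 1) * c (\<alpha>(j := \<alpha> j + 1)))"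

definition sos_convex :: "(('n::finite \<Rightarrow> nat) \<Rightarrow> real) \<Rightarrow> bool" where
  "sos_convex c \<longleftrightarrow>
     (\<exists>(K::nat) (F :: nat \<Rightarrow> 'n \<Rightarrow> (('n \<Rightarrow> nat) \<Rightarrow> real)).
        (\<forall>t<K. \<forall>k. is_mpoly (F t k)) \<and>
        (\<forall>k l x. peval (pdiff k (pdiff l c)) x = (\<Sum>t<K. peval (F t k) x * peval (F t l) x)))"

definition sos_mpoly :: "nat \<Rightarrow> (real^'n::finite \<Rightarrow> real) \<Rightarrow> bool" where
  "sos_mpoly r \<sigma> \<longleftrightarrow>
     (\<exists>(K::nat) (q :: nat \<Rightarrow> ('n \<Rightarrow> nat) \<Rightarrow> real).
        (\<forall>k<K. mpoly_deg_le r (q k)) \<and> (\<forall>x. \<sigma> x = (\<Sum>k<K. (peval (q k) x)^2)))"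

definition sos_upoly :: "nat \<Rightarrow> real poly \<Rightarrow> bool" where
  "sos_upoly d s \<longleftrightarrow>
     (\<exists>(K::nat) (q :: nat \<Rightarrow> real poly). (\<forall>k<K. degree (q k) \<le> d) \<and> s = (\<Sum>k<K. (q k)^2))"

definition psd_on :: "'a set \<Rightarrow> ('a \<Rightarrow> 'a \<Rightarrow> real) \<Rightarrow> bool" where
  "psd_on E M \<longleftrightarrow> (\<forall>v. 0 \<le> (\<Sum>a\<in>E. \<Sum>b\<in>E. v a * M a b * v b))"

definition d0 :: "('n::finite \<Rightarrow> nat) \<Rightarrow> nat" where
  "d0 d = Max (range d)"

definition feas_D :: "nat \<Rightarrow> nat \<Rightarrow> ('n::finite \<Rightarrow> nat)
    \<Rightarrow> (('n \<Rightarrow> nat) \<Rightarrow> real) \<Rightarrow> (nat \<Rightarrow> ('n \<Rightarrow> nat) \<Rightarrow> real)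
    \<Rightarrow> real \<Rightarrow> (nat \<Rightarrow> real) \<Rightarrow> (real^'n \<Rightarrow> real) \<Rightarrow> ('n \<Rightarrow> real poly) \<Rightarrow> bool" where
  "feas_D m r d fc gc \<mu> lam \<sigma> \<sigma>s \<longleftrightarrow>
     (\<forall>i\<in>{1..m}. 0 \<le> lam i) \<and> sos_mpoly r \<sigma> \<and> (\<forall>j. sos_upoly (d j) (\<sigma>s j)) \<and>
     (\<forall>x. peval fc x + (\<Sum>i=1..m. lam i * peval (gc i) x) - \<mu>
            = \<sigma> x + (\<Sum>j\<in>UNIV. poly (\<sigma>s j) (x $ j)))"

definition feas_Dt :: "nat \<Rightarrow> nat \<Rightarrow> ('n::finite \<Rightarrow> nat)
    \<Rightarrow> (nat \<Rightarrow> ('n \<Rightarrow> nat) \<Rightarrow> real) \<Rightarrow> (('n \<Rightarrow> nat) \<Rightarrow> real) \<Rightarrow> bool" where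
  "feas_Dt m r d gc y \<longleftrightarrow>
     (\<forall>i\<in>{1..m}. (\<Sum>\<alpha>\<in>exps (2 * d0 d). gc i \<alpha> * y \<alpha>) \<le> 0) \<and>
     (\<forall>j. psd_on {0..d j}
            (\<lambda>a b. \<Sum>\<alpha>\<in>exps (2 * d0 d).
                 y \<alpha> * (if \<alpha> = (\<lambda>k. if k = j then a + b else 0) then 1 else 0))) \<and>
     psd_on (exps r)
            (\<lambda>\<beta> \<gamma>. \<Sum>\<alpha>\<in>exps (2 * d0 d).
                 y \<alpha> * (if \<alpha> = (\<lambda>k. \<beta> k + \<gamma> k) then 1 else 0)) \<and>
     y (\<lambda>_. 0) = 1"

definition obj_Dt :: "('n::finite \<Rightarrow> nat) \<Rightarrow> (('n \<Rightarrow> nat) \<Rightarrow> real) \<Rightarrow> (('n \<Rightarrow> nat) \<Rightarrow> real) \<Rightarrow> real" where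
  "obj_Dt d fc y = (\<Sum>\<alpha>\<in>exps (2 * d0 d). fc \<alpha> * y \<alpha>)"

definition feas_CP :: "nat \<Rightarrow> (nat \<Rightarrow> ('n::finite \<Rightarrow> nat) \<Rightarrow> real) \<Rightarrow> (real^'n) set" where
  "feas_CP m gc = {x. \<forall>i\<in>{1..m}. peval (gc i) x \<le> 0}"

definition val_CP :: "nat \<Rightarrow> (('n::finite \<Rightarrow> nat) \<Rightarrow> real) \<Rightarrow> (nat \<Rightarrow> ('n \<Rightarrow> nat) \<Rightarrow> real) \<Rightarrow> real" where
  "val_CP m fc gc = Inf (peval fc ` feas_CP m gc)"

end

(* Slater's condition and convex separation give multipliers lam >= 0 with
   val(CP) <= L x = f x + (sum of lam i * g i x) for all x.  The Lagrangian L is a convex polynomial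
   bounded below, so it attains its minimum at some y, where its gradient vanishes.  Subtracting the
   tangent plane at y therefore splits L - val(CP) into the nonnegative constant L y - val(CP), the
   tangent gaps of the univariate convex parts, which are nonnegative univariate polynomials and hence
   sums of squares of degree at most d j, and the tangent gap of the SOS-convex part, which is a sum of
   squares of degree at most r by the integral form of the Taylor remainder.  This is an optimal
   solution of the SOS dual of value val(CP); weak duality is immediate.  The moment relaxation lies in
   between: point evaluations are feasible moment vectors, and applying a feasible moment vector to
   the certificate identity shows that its value is at least val(CP). *)

theory Submission
  imports Defs "HOL-Computational_Algebra.Fundamental_Theorem_Algebra"
begin

section \<open>Polynomial functions\<close>

lemma finite_exps[simp]: "finite (exps D :: ('n::finite \<Rightarrow> nat) set)"
proof -
  have "(exps D :: ('n \<Rightarrow> nat) set) \<subseteq> PiE UNIV (\<lambda>_. {..D})"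
  proof
    fix \<alpha> :: "'n \<Rightarrow> nat" assume "\<alpha> \<in> exps D"
    then have s: "sum \<alpha> UNIV \<le> D" by (simp add: exps_def)
    have "\<alpha> j \<le> sum \<alpha> UNIV" for j by (rule member_le_sum) auto
    then have "\<forall>j. \<alpha> j \<le> D" using s order_trans by blast
    then show "\<alpha> \<in> PiE UNIV (\<lambda>_. {..D})" by (simp add: PiE_iff extensional_def)
  qed
  moreover have "finite (PiE (UNIV::'n set) (\<lambda>_. {..D}))" by (rule finite_PiE) auto
  ultimately show ?thesis by (rule finite_subset)
qed

lemma exps_mono: "D \<le> E \<Longrightarrow> exps D \<subseteq> exps E"
  by (auto simp: exps_def)

lemma exps_add: "\<alpha> \<in> exps D \<Longrightarrow> \<beta> \<in> exps E \<Longrightarrow> (\<lambda>k. \<alpha> k + \<beta> k) \<in> exps (D + E)"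
  by (auto simp: exps_def sum.distrib)

lemma mon_add: "mon (\<lambda>k. \<alpha> k + \<beta> k) x = mon \<alpha> x * mon \<beta> x"
  by (simp add: mon_def power_add prod.distrib)

lemma mon_zero[simp]: "mon (\<lambda>_. 0) x = 1"
  by (simp add: mon_def)

definition poly_fun :: "nat \<Rightarrow> (real^'n::finite \<Rightarrow> real) \<Rightarrow> bool" where
  "poly_fun D f \<longleftrightarrow> (\<exists>a. \<forall>x. f x = (\<Sum>\<alpha>\<in>exps D. a \<alpha> * mon \<alpha> x))"

lemma poly_fun_sum_mon:
  assumes "finite A" "A \<subseteq> exps D"
  shows "poly_fun D (\<lambda>x. \<Sum>\<alpha>\<in>A. a \<alpha> * mon \<alpha> x)"
  unfolding poly_fun_def
proof (intro exI allI)
  fix x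
  have "(\<Sum>\<alpha>\<in>exps D. (if \<alpha> \<in> A then a \<alpha> else 0) * mon \<alpha> x) = (\<Sum>\<alpha>\<in>A. (if \<alpha> \<in> A then a \<alpha> else 0) * mon \<alpha> x)"
    by (rule sum.mono_neutral_right) (use assms in auto)
  then show "(\<Sum>\<alpha>\<in>A. a \<alpha> * mon \<alpha> x) = (\<Sum>\<alpha>\<in>exps D. (if \<alpha> \<in> A then a \<alpha> else 0) * mon \<alpha> x)"
    by simp
qed

lemma poly_fun_mono: "poly_fun D f \<Longrightarrow> D \<le> E \<Longrightarrow> poly_fun E f"
proof -
  assume "poly_fun D f" "D \<le> E"
  then obtain a where a: "\<And>x. f x = (\<Sum>\<alpha>\<in>exps D. a \<alpha> * mon \<alpha> x)" by (auto simp: poly_fun_def)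
  have "poly_fun E (\<lambda>x. \<Sum>\<alpha>\<in>exps D. a \<alpha> * mon \<alpha> x)"
    by (rule poly_fun_sum_mon) (use exps_mono[OF \<open>D \<le> E\<close>] in auto)
  then show ?thesis using a by (simp add: poly_fun_def)
qed

lemma poly_fun_mon: "\<alpha> \<in> exps D \<Longrightarrow> poly_fun D (mon \<alpha>)"
  using poly_fun_sum_mon[of "{\<alpha>}" D "\<lambda>_. 1"] by simp

lemma poly_fun_cong: "poly_fun D f \<Longrightarrow> (\<And>x. f x = g x) \<Longrightarrow> poly_fun D g"
  unfolding poly_fun_def by auto

lemma poly_fun_const: "poly_fun D (\<lambda>x. c)"
proof -
  have "(\<lambda>_. 0) \<in> exps D" by (simp add: exps_def)
  then show ?thesis using poly_fun_sum_mon[of "{\<lambda>_. 0}" D "\<lambda>_. c"] by simp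
qed

lemma poly_fun_add: "poly_fun D f \<Longrightarrow> poly_fun D g \<Longrightarrow> poly_fun D (\<lambda>x. f x + g x)"
  unfolding poly_fun_def
proof (elim exE)
  fix a b assume "\<forall>x. f x = (\<Sum>\<alpha>\<in>exps D. a \<alpha> * mon \<alpha> x)" "\<forall>x. g x = (\<Sum>\<alpha>\<in>exps D. b \<alpha> * mon \<alpha> x)"
  then show "\<exists>c. \<forall>x. f x + g x = (\<Sum>\<alpha>\<in>exps D. c \<alpha> * mon \<alpha> x)"
    by (intro exI[of _ "\<lambda>\<alpha>. a \<alpha> + b \<alpha>"]) (simp add: sum.distrib distrib_right)
qed

lemma poly_fun_cmult: "poly_fun D f \<Longrightarrow> poly_fun D (\<lambda>x. c * f x)"
  unfolding poly_fun_def
proof (elim exE)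
  fix a assume "\<forall>x. f x = (\<Sum>\<alpha>\<in>exps D. a \<alpha> * mon \<alpha> x)"
  then show "\<exists>b. \<forall>x. c * f x = (\<Sum>\<alpha>\<in>exps D. b \<alpha> * mon \<alpha> x)"
    by (intro exI[of _ "\<lambda>\<alpha>. c * a \<alpha>"]) (simp add: sum_distrib_left mult.assoc)
qed

lemma poly_fun_neg: "poly_fun D f \<Longrightarrow> poly_fun D (\<lambda>x. - f x)"
  using poly_fun_cmult[of D f "-1"] by simp

lemma poly_fun_diff: "poly_fun D f \<Longrightarrow> poly_fun D g \<Longrightarrow> poly_fun D (\<lambda>x. f x - g x)"
  using poly_fun_add[of D f "\<lambda>x. - g x"] poly_fun_neg[of D g] by simp

lemma poly_fun_sum: "finite I \<Longrightarrow> (\<And>i. i \<in> I \<Longrightarrow> poly_fun D (f i)) \<Longrightarrow> poly_fun D (\<lambda>x. \<Sum>i\<in>I. f i x)"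
proof (induction I rule: finite_induct)
  case empty then show ?case using poly_fun_const[of D 0] by simp
next
  case (insert i I) then show ?case using poly_fun_add[of D "f i" "\<lambda>x. \<Sum>i\<in>I. f i x"] by simp
qed

lemma poly_fun_mon_mult:
  assumes "\<alpha> \<in> exps D" "poly_fun E g"
  shows "poly_fun (D + E) (\<lambda>x. mon \<alpha> x * g x)"
proof -
  from assms(2) obtain b where b: "\<And>x. g x = (\<Sum>\<beta>\<in>exps E. b \<beta> * mon \<beta> x)" by (auto simp: poly_fun_def)
  have inj: "inj_on (\<lambda>\<beta> k. \<alpha> k + \<beta> k) (exps E)" by (auto simp: inj_on_def fun_eq_iff)
  have "mon \<alpha> x * g x = (\<Sum>\<gamma>\<in>(\<lambda>\<beta> k. \<alpha> k + \<beta> k) ` exps E. b (\<lambda>k. \<gamma> k - \<alpha> k) * mon \<gamma> x)" for x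
  proof -
    have "(\<Sum>\<gamma>\<in>(\<lambda>\<beta> k. \<alpha> k + \<beta> k) ` exps E. b (\<lambda>k. \<gamma> k - \<alpha> k) * mon \<gamma> x)
        = (\<Sum>\<beta>\<in>exps E. b \<beta> * mon (\<lambda>k. \<alpha> k + \<beta> k) x)"
      by (subst sum.reindex[OF inj]) (simp add: o_def)
    also have "\<dots> = mon \<alpha> x * g x"
      by (simp add: b sum_distrib_left mon_add mult.commute mult.left_commute)
    finally show ?thesis by simp
  qed
  moreover have "poly_fun (D + E) (\<lambda>x. \<Sum>\<gamma>\<in>(\<lambda>\<beta> k. \<alpha> k + \<beta> k) ` exps E. b (\<lambda>k. \<gamma> k - \<alpha> k) * mon \<gamma> x)"
    by (rule poly_fun_sum_mon) (use assms(1) exps_add in auto)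
  ultimately show ?thesis by (simp add: poly_fun_cong)
qed

lemma poly_fun_mult: "poly_fun D f \<Longrightarrow> poly_fun E g \<Longrightarrow> poly_fun (D + E) (\<lambda>x. f x * g x)"
proof -
  assume "poly_fun D f" "poly_fun E g"
  then obtain a where a: "\<And>x. f x = (\<Sum>\<alpha>\<in>exps D. a \<alpha> * mon \<alpha> x)" by (auto simp: poly_fun_def)
  have "poly_fun (D + E) (\<lambda>x. \<Sum>\<alpha>\<in>exps D. a \<alpha> * (mon \<alpha> x * g x))"
    by (intro poly_fun_sum poly_fun_cmult poly_fun_mon_mult) (use \<open>poly_fun E g\<close> in auto)
  then show ?thesis by (rule poly_fun_cong) (simp add: a sum_distrib_right mult.assoc)
qed

lemma poly_fun_coord: "poly_fun 1 (\<lambda>x. x $ j)"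
proof -
  have "(\<lambda>k. if k = j then 1 else 0) \<in> exps 1" by (simp add: exps_def)
  moreover have "mon (\<lambda>k. if k = j then 1 else 0) x = x $ j" for x
  proof -
    have "(x$k)^(if k = j then 1 else 0) = (if k = j then x$k else 1)" for k by simp
    then show ?thesis by (simp add: mon_def)
  qed
  ultimately show ?thesis using poly_fun_mon[of "\<lambda>k. if k = j then 1 else 0" 1] by (simp add: poly_fun_cong)
qed

lemma poly_fun_pow: "poly_fun D f \<Longrightarrow> poly_fun (D * k) (\<lambda>x. f x ^ k)"
proof (induction k)
  case 0 then show ?case using poly_fun_const[of 0 1] by simp
next
  case (Suc k)
  then have "poly_fun (D + D * k) (\<lambda>x. f x * f x ^ k)" using poly_fun_mult by blast
  then show ?case by (simp add: poly_fun_cong)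
qed

lemma poly_fun_upoly: "degree p \<le> D \<Longrightarrow> poly_fun D (\<lambda>x. poly p (x $ j))"
proof -
  assume "degree p \<le> D"
  have "poly_fun D (\<lambda>x. \<Sum>i\<le>degree p. coeff p i * (x $ j) ^ i)"
  proof (intro poly_fun_sum poly_fun_cmult)
    fix i assume "i \<in> {..degree p}"
    then have "poly_fun (1 * i) (\<lambda>x. (x $ j) ^ i)" using poly_fun_pow[OF poly_fun_coord] by blast
    then show "poly_fun D (\<lambda>x. (x $ j) ^ i)" using \<open>i \<in> _\<close> \<open>degree p \<le> D\<close> by (auto intro: poly_fun_mono)
  qed simp
  then show ?thesis by (simp add: poly_altdef poly_fun_cong)
qed

lemma peval_eq_sum_superset: "finite A \<Longrightarrow> {\<alpha>. c \<alpha> \<noteq> 0} \<subseteq> A \<Longrightarrow> peval c x = (\<Sum>\<alpha>\<in>A. c \<alpha> * mon \<alpha> x)"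
  unfolding peval_def by (rule sum.mono_neutral_left) auto

lemma mpoly_deg_le_support: "mpoly_deg_le D c \<Longrightarrow> {\<alpha>. c \<alpha> \<noteq> 0} \<subseteq> exps D"
  by (auto simp: mpoly_deg_le_def)

lemma poly_fun_peval: "mpoly_deg_le D c \<Longrightarrow> poly_fun D (peval c)"
  using peval_eq_sum_superset[of "exps D" c] mpoly_deg_le_support[of D c] poly_fun_sum_mon[of "exps D" D c] by (simp add: poly_fun_cong)

lemma poly_fun_imp_peval: "poly_fun D f \<Longrightarrow> \<exists>c. mpoly_deg_le D c \<and> is_mpoly c \<and> (\<forall>x. f x = peval c x)"
proof -
  assume "poly_fun D f"
  then obtain a where a: "\<And>x. f x = (\<Sum>\<alpha>\<in>exps D. a \<alpha> * mon \<alpha> x)" by (auto simp: poly_fun_def)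
  define c where "c = (\<lambda>\<alpha>. if \<alpha> \<in> exps D then a \<alpha> else 0)"
  have s: "{\<alpha>. c \<alpha> \<noteq> 0} \<subseteq> exps D" by (auto simp: c_def split: if_splits)
  have "mpoly_deg_le D c" by (auto simp: mpoly_deg_le_def c_def split: if_splits)
  moreover have "is_mpoly c" using s finite_exps by (auto simp: is_mpoly_def intro: finite_subset)
  moreover have "f x = peval c x" for x
    by (simp add: a peval_eq_sum_superset[OF finite_exps s]) (simp add: c_def)
  ultimately show ?thesis by blast
qed

lemma is_mpoly_imp_deg_le: "is_mpoly c \<Longrightarrow> \<exists>D. mpoly_deg_le D c"
proof -
  assume "is_mpoly c"
  then have f: "finite {\<alpha>. c \<alpha> \<noteq> 0}" by (simp add: is_mpoly_def)
  define D where "D = Max ((\<lambda>\<alpha>. sum \<alpha> UNIV) ` {\<alpha>. c \<alpha> \<noteq> 0})"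
  have "mpoly_deg_le D c" unfolding mpoly_deg_le_def exps_def D_def
    using f by (auto intro: Max_ge)
  then show ?thesis by blast
qed

section \<open>Linear independence of monomials\<close>

lemma power_sum_eq_0_imp_coeff_0:
  fixes c :: "nat \<Rightarrow> real"
  assumes "finite E" "\<And>t. (\<Sum>e\<in>E. c e * t ^ e) = 0" "e \<in> E"
  shows "c e = 0"
proof -
  define p where "p = (\<Sum>e\<in>E. monom (c e) e)"
  have "poly p t = 0" for t using assms(2) by (simp add: p_def poly_sum poly_monom)
  then have "p = 0" using poly_all_0_iff_0 by blast
  then have "coeff p e = 0" by simp
  moreover have "coeff p e = c e" using assms(1,3)
    by (simp add: p_def coeff_sum coeff_monom)
  ultimately show ?thesis by simp
qed

definition vec_upd :: "real^'n \<Rightarrow> 'n \<Rightarrow> real \<Rightarrow> real^'n" where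
  "vec_upd x j t = (\<chi> k. if k = j then t else x $ k)"

lemma mon_vec_upd: "mon \<alpha> (vec_upd x j t) = t ^ (\<alpha> j) * mon (\<alpha>(j := 0)) x"
proof -
  have "mon \<alpha> (vec_upd x j t) = (vec_upd x j t $ j) ^ \<alpha> j * (\<Prod>k\<in>UNIV - {j}. (vec_upd x j t $ k) ^ \<alpha> k)"
    unfolding mon_def by (subst prod.remove[of _ j]) auto
  also have "(\<Prod>k\<in>UNIV - {j}. (vec_upd x j t $ k) ^ \<alpha> k) = (\<Prod>k\<in>UNIV - {j}. (x $ k) ^ \<alpha> k)"
    by (rule prod.cong) (auto simp: vec_upd_def)
  also have "\<dots> = mon (\<alpha>(j := 0)) x"
    unfolding mon_def by (subst prod.remove[of _ j]) (auto intro!: prod.cong)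
  finally show ?thesis by (simp add: vec_upd_def)
qed

lemma mon_sum_vec_upd:
  assumes "finite A"
  shows "(\<Sum>\<alpha>\<in>A. a \<alpha> * mon \<alpha> (vec_upd x j t))
    = (\<Sum>e\<in>(\<lambda>\<alpha>. \<alpha> j) ` A. (\<Sum>\<beta>\<in>{\<beta>\<in>A. \<beta> j = e}. a \<beta> * mon (\<beta>(j := 0)) x) * t ^ e)"
proof -
  have "(\<Sum>e\<in>(\<lambda>\<alpha>. \<alpha> j) ` A. (\<Sum>\<beta>\<in>{\<beta>\<in>A. \<beta> j = e}. a \<beta> * mon (\<beta>(j := 0)) x) * t ^ e)
      = (\<Sum>e\<in>(\<lambda>\<alpha>. \<alpha> j) ` A. \<Sum>\<beta>\<in>{\<beta>\<in>A. \<beta> j = e}. a \<beta> * mon \<beta> (vec_upd x j t))"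
    by (intro sum.cong refl) (auto simp: sum_distrib_right mon_vec_upd intro!: sum.cong)
  also have "\<dots> = (\<Sum>\<beta>\<in>A. a \<beta> * mon \<beta> (vec_upd x j t))"
    by (rule sum.group) (use assms in auto)
  finally show ?thesis ..
qed

lemma mon_sum_eq_0_imp_coeff_0_vars:
  fixes V :: "'n::finite set"
  shows "finite V \<Longrightarrow> finite A \<Longrightarrow> (\<forall>\<alpha>\<in>A. \<forall>j. j \<notin> V \<longrightarrow> \<alpha> j = 0) \<Longrightarrow> (\<forall>x. (\<Sum>\<alpha>\<in>A. a \<alpha> * mon \<alpha> x) = 0)
    \<Longrightarrow> \<alpha> \<in> A \<Longrightarrow> a \<alpha> = 0"
proof (induction V arbitrary: A a \<alpha> rule: finite_induct)
  case empty
  then have "A = {\<lambda>_. 0}" "\<alpha> = (\<lambda>_. 0)" by auto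
  with empty show ?case by auto
next
  case (insert j V)
  define e where "e = \<alpha> j"
  define A' where "A' = (\<lambda>\<beta>. \<beta>(j := 0)) ` {\<beta>\<in>A. \<beta> j = e}"
  have slice: "(\<Sum>\<beta>\<in>{\<beta>\<in>A. \<beta> j = e}. a \<beta> * mon (\<beta>(j := 0)) x) = 0" for x
  proof (rule power_sum_eq_0_imp_coeff_0[of "(\<lambda>\<alpha>. \<alpha> j) ` A"])
    show "(\<Sum>e\<in>(\<lambda>\<alpha>. \<alpha> j) ` A. (\<Sum>\<beta>\<in>{\<beta>\<in>A. \<beta> j = e}. a \<beta> * mon (\<beta>(j := 0)) x) * t ^ e) = 0" for t
      using insert.prems by (simp add: mon_sum_vec_upd[symmetric])
  qed (use insert.prems in \<open>auto simp: e_def\<close>)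
  have inj: "inj_on (\<lambda>\<beta>. \<beta>(j := 0)) {\<beta>\<in>A. \<beta> j = e}"
    by (rule inj_onI) (metis (mono_tags, lifting) fun_upd_idem_iff fun_upd_upd mem_Collect_eq)
  have "a ((\<alpha>(j := 0))(j := e)) = 0"
  proof (rule insert.IH[where A = A' and a = "\<lambda>\<beta>. a (\<beta>(j := e))"])
    show "finite A'" using insert by (simp add: A'_def)
    show "\<forall>\<alpha>\<in>A'. \<forall>k. k \<notin> V \<longrightarrow> \<alpha> k = 0" using insert.prems(2) by (auto simp: A'_def)
    show "\<alpha>(j := 0) \<in> A'" using insert.prems(4) by (auto simp: A'_def e_def)
    show "\<forall>x. (\<Sum>\<beta>\<in>A'. a (\<beta>(j := e)) * mon \<beta> x) = 0"
    proof
      fix x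
      have "(\<Sum>\<beta>\<in>A'. a (\<beta>(j := e)) * mon \<beta> x) = (\<Sum>\<beta>\<in>{\<beta>\<in>A. \<beta> j = e}. a \<beta> * mon (\<beta>(j := 0)) x)"
        unfolding A'_def by (subst sum.reindex[OF inj]) (auto intro!: sum.cong)
      with slice show "(\<Sum>\<beta>\<in>A'. a (\<beta>(j := e)) * mon \<beta> x) = 0" by simp
    qed
  qed
  then show ?case by (simp add: e_def)
qed

lemma mon_sum_eq_0_imp_coeff_0:
  fixes A :: "('n::finite \<Rightarrow> nat) set"
  shows "finite A \<Longrightarrow> (\<And>x. (\<Sum>\<alpha>\<in>A. a \<alpha> * mon \<alpha> x) = 0) \<Longrightarrow> \<alpha> \<in> A \<Longrightarrow> a \<alpha> = 0"
  using mon_sum_eq_0_imp_coeff_0_vars[where V = "UNIV::'n set" and A = A and a = a and \<alpha> = \<alpha>] by auto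

lemma mon_sum_eq_imp_coeff_eq:
  fixes A :: "('n::finite \<Rightarrow> nat) set"
  shows "finite A \<Longrightarrow> (\<And>x. (\<Sum>\<alpha>\<in>A. a \<alpha> * mon \<alpha> x) = (\<Sum>\<alpha>\<in>A. b \<alpha> * mon \<alpha> x)) \<Longrightarrow> \<alpha> \<in> A \<Longrightarrow> a \<alpha> = b \<alpha>"
  using mon_sum_eq_0_imp_coeff_0[of A "\<lambda>\<alpha>. a \<alpha> - b \<alpha>" \<alpha>] by (simp add: left_diff_distrib sum_subtractf)

lemma poly_fun_peval_support:
  assumes "is_mpoly c" "poly_fun D (peval c)"
  shows "{\<alpha>. c \<alpha> \<noteq> 0} \<subseteq> exps D"
proof
  fix \<alpha> assume \<alpha>: "\<alpha> \<in> {\<alpha>. c \<alpha> \<noteq> 0}"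
  from assms(2) obtain a where a: "\<And>x. peval c x = (\<Sum>\<alpha>\<in>exps D. a \<alpha> * mon \<alpha> x)" by (auto simp: poly_fun_def)
  define S where "S = {\<alpha>. c \<alpha> \<noteq> 0} \<union> exps D"
  have fS: "finite S" using assms(1) by (simp add: S_def is_mpoly_def)
  have "(\<Sum>\<beta>\<in>S. c \<beta> * mon \<beta> x) = (\<Sum>\<beta>\<in>S. (if \<beta> \<in> exps D then a \<beta> else 0) * mon \<beta> x)" for x
  proof -
    have "(\<Sum>\<beta>\<in>S. c \<beta> * mon \<beta> x) = peval c x" by (rule peval_eq_sum_superset[symmetric]) (use fS in \<open>auto simp: S_def\<close>)
    also have "\<dots> = (\<Sum>\<beta>\<in>exps D. a \<beta> * mon \<beta> x)" by (rule a)
    also have "\<dots> = (\<Sum>\<beta>\<in>exps D. (if \<beta> \<in> exps D then a \<beta> else 0) * mon \<beta> x)"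
      by simp
    also have "\<dots> = (\<Sum>\<beta>\<in>S. (if \<beta> \<in> exps D then a \<beta> else 0) * mon \<beta> x)"
      by (rule sum.mono_neutral_left) (use fS in \<open>auto simp: S_def\<close>)
    finally show ?thesis .
  qed
  then have "c \<alpha> = (if \<alpha> \<in> exps D then a \<alpha> else 0)"
    by (rule mon_sum_eq_imp_coeff_eq[OF fS]) (use \<alpha> in \<open>auto simp: S_def\<close>)
  with \<alpha> show "\<alpha> \<in> exps D" by (auto split: if_splits)
qed

section \<open>Restriction to lines\<close>

definition line_poly :: "('n::finite \<Rightarrow> nat) set \<Rightarrow> (('n \<Rightarrow> nat) \<Rightarrow> real) \<Rightarrow> real^'n \<Rightarrow> real^'n \<Rightarrow> real poly" where
  "line_poly A a x v = (\<Sum>\<alpha>\<in>A. smult (a \<alpha>) (\<Prod>j\<in>UNIV. [:x$j, v$j:] ^ \<alpha> j))"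

lemma poly_line_poly: "poly (line_poly A a x v) s = (\<Sum>\<alpha>\<in>A. a \<alpha> * mon \<alpha> (x + s *\<^sub>R v))"
  by (simp add: line_poly_def poly_sum poly_prod mon_def algebra_simps)

lemma degree_line_poly:
  assumes "finite A" "A \<subseteq> exps D"
  shows "degree (line_poly A a x v) \<le> D"
  unfolding line_poly_def
proof (rule degree_sum_le[OF assms(1)])
  fix \<alpha> assume "\<alpha> \<in> A"
  have "degree (\<Prod>j\<in>UNIV. [:x$j, v$j:] ^ \<alpha> j) \<le> (\<Sum>j\<in>UNIV. degree ([:x$j, v$j:] ^ \<alpha> j))"
    using degree_prod_sum_le[of UNIV "\<lambda>j. [:x$j, v$j:] ^ \<alpha> j"] by (simp add: o_def)
  also have "\<dots> \<le> (\<Sum>j\<in>UNIV. \<alpha> j)"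
  proof (rule sum_mono)
    fix j
    have "degree ([:x$j, v$j:] ^ \<alpha> j) \<le> degree [:x$j, v$j:] * \<alpha> j" by (rule degree_power_le)
    also have "\<dots> \<le> 1 * \<alpha> j" by (intro mult_right_mono) auto
    finally show "degree ([:x$j, v$j:] ^ \<alpha> j) \<le> \<alpha> j" by simp
  qed
  also have "\<dots> \<le> D" using assms \<open>\<alpha> \<in> A\<close> by (auto simp: exps_def)
  finally show "degree (smult (a \<alpha>) (\<Prod>j\<in>UNIV. [:x$j, v$j:] ^ \<alpha> j)) \<le> D"
    using degree_smult_le order_trans by blast
qed

lemma poly_fun_line_poly:
  assumes "poly_fun D f"
  shows "\<exists>p. degree p \<le> D \<and> (\<forall>s. poly p s = f (x + s *\<^sub>R v))"
proof -
  from assms obtain a where a: "\<And>x. f x = (\<Sum>\<alpha>\<in>exps D. a \<alpha> * mon \<alpha> x)" by (auto simp: poly_fun_def)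
  show ?thesis
    by (rule exI[of _ "line_poly (exps D) a x v"]) (simp add: degree_line_poly poly_line_poly a)
qed

lemma peval_line_poly: "is_mpoly c \<Longrightarrow> poly (line_poly {\<alpha>. c \<alpha> \<noteq> 0} c x v) s = peval c (x + s *\<^sub>R v)"
  by (simp add: poly_line_poly peval_def)

definition poly_fun_coeffs :: "nat \<Rightarrow> (real^'n::finite \<Rightarrow> real poly) \<Rightarrow> bool" where
  "poly_fun_coeffs D G \<longleftrightarrow> (\<forall>i. poly_fun D (\<lambda>x. coeff (G x) i))"

lemma poly_fun_coeffs_mono: "poly_fun_coeffs D G \<Longrightarrow> D \<le> E \<Longrightarrow> poly_fun_coeffs E G"
  by (auto simp: poly_fun_coeffs_def intro: poly_fun_mono)

lemma poly_fun_coeffs_sum: "finite I \<Longrightarrow> (\<And>i. i \<in> I \<Longrightarrow> poly_fun_coeffs D (G i)) \<Longrightarrow> poly_fun_coeffs D (\<lambda>x. \<Sum>i\<in>I. G i x)"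
  by (auto simp: poly_fun_coeffs_def coeff_sum intro!: poly_fun_sum)

lemma poly_fun_coeffs_mult: "poly_fun_coeffs D G \<Longrightarrow> poly_fun_coeffs E H \<Longrightarrow> poly_fun_coeffs (D + E) (\<lambda>x. G x * H x)"
  by (auto simp: poly_fun_coeffs_def coeff_mult intro!: poly_fun_sum poly_fun_mult)

lemma poly_fun_coeffs_smult: "poly_fun D c \<Longrightarrow> poly_fun_coeffs E G \<Longrightarrow> poly_fun_coeffs (D + E) (\<lambda>x. smult (c x) (G x))"
  by (auto simp: poly_fun_coeffs_def intro!: poly_fun_mult)

lemma poly_fun_coeffs_const: "poly_fun_coeffs D (\<lambda>x. p)"
  by (auto simp: poly_fun_coeffs_def intro: poly_fun_const)

lemma poly_fun_coeffs_pow: "poly_fun_coeffs D G \<Longrightarrow> poly_fun_coeffs (D * k) (\<lambda>x. G x ^ k)"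
proof (induction k)
  case 0 then show ?case by (simp add: poly_fun_coeffs_const)
next
  case (Suc k)
  then have "poly_fun_coeffs (D + D * k) (\<lambda>x. G x * G x ^ k)" using poly_fun_coeffs_mult by blast
  then show ?case by simp
qed

lemma poly_fun_coeffs_prod: "finite I \<Longrightarrow> (\<And>i. i \<in> I \<Longrightarrow> poly_fun_coeffs (D i) (G i)) \<Longrightarrow> poly_fun_coeffs (\<Sum>i\<in>I. D i) (\<lambda>x. \<Prod>i\<in>I. G i x)"
proof (induction I rule: finite_induct)
  case empty then show ?case by (simp add: poly_fun_coeffs_const)
next
  case (insert i I) then show ?case using poly_fun_coeffs_mult[of "D i" "G i" "\<Sum>i\<in>I. D i" "\<lambda>x. \<Prod>i\<in>I. G i x"] by simp
qed

lemma coeff_linear_poly: "coeff [:a, b:] i = (if i = 0 then a else if i = 1 then b else 0)"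
  by (cases i) (auto simp: coeff_pCons split: nat.splits)

lemma poly_fun_coeffs_linear: "poly_fun_coeffs 1 (\<lambda>x. [:y$j, x$j - y$j:])"
  unfolding poly_fun_coeffs_def
proof
  fix i
  show "poly_fun 1 (\<lambda>x. coeff [:y $ j, x $ j - y $ j:] i)"
    using poly_fun_coord[of j] by (cases "i = 0"; cases "i = 1") (auto simp: coeff_linear_poly intro!: poly_fun_const poly_fun_diff)
qed

lemma poly_fun_coeffs_line_poly:
  assumes "finite A" "A \<subseteq> exps D"
  shows "poly_fun_coeffs D (\<lambda>x. line_poly A a y (x - y))"
proof -
  have "poly_fun_coeffs D (\<lambda>x. \<Sum>\<alpha>\<in>A. smult (a \<alpha>) (\<Prod>j\<in>UNIV. [:y$j, (x - y)$j:] ^ \<alpha> j))"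
  proof (intro poly_fun_coeffs_sum)
    fix \<alpha> assume "\<alpha> \<in> A"
    have "poly_fun_coeffs (\<Sum>j\<in>UNIV. 1 * \<alpha> j) (\<lambda>x. \<Prod>j\<in>UNIV. [:y$j, x$j - y$j:] ^ \<alpha> j)"
      by (intro poly_fun_coeffs_prod poly_fun_coeffs_pow poly_fun_coeffs_linear) auto
    then have "poly_fun_coeffs D (\<lambda>x. \<Prod>j\<in>UNIV. [:y$j, x$j - y$j:] ^ \<alpha> j)"
      by (rule poly_fun_coeffs_mono) (use assms \<open>\<alpha> \<in> A\<close> in \<open>auto simp: exps_def\<close>)
    then have "poly_fun_coeffs (0 + D) (\<lambda>x. smult (a \<alpha>) (\<Prod>j\<in>UNIV. [:y$j, x$j - y$j:] ^ \<alpha> j))"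
      by (intro poly_fun_coeffs_smult poly_fun_const)
    then show "poly_fun_coeffs D (\<lambda>x. smult (a \<alpha>) (\<Prod>j\<in>UNIV. [:y$j, (x - y)$j:] ^ \<alpha> j))" by simp
  qed (use assms in auto)
  then show ?thesis by (simp add: line_poly_def)
qed

lemma is_mpoly_pdiff:
  assumes "is_mpoly c" shows "is_mpoly (pdiff k c)"
proof -
  have sub: "{\<beta>. pdiff k c \<beta> \<noteq> 0} \<subseteq> (\<lambda>\<alpha>. \<alpha>(k := \<alpha> k - 1)) ` {\<alpha>. c \<alpha> \<noteq> 0}"
  proof
    fix \<beta> assume "\<beta> \<in> {\<beta>. pdiff k c \<beta> \<noteq> 0}"
    then have "c (\<beta>(k := \<beta> k + 1)) \<noteq> 0" by (simp add: pdiff_def)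
    moreover have "\<beta> = (\<beta>(k := \<beta> k + 1))(k := (\<beta>(k := \<beta> k + 1)) k - 1)" by simp
    ultimately show "\<beta> \<in> (\<lambda>\<alpha>. \<alpha>(k := \<alpha> k - 1)) ` {\<alpha>. c \<alpha> \<noteq> 0}" by blast
  qed
  show ?thesis using finite_surj[OF _ sub] assms unfolding is_mpoly_def by blast
qed

lemma mon_split_var: "mon \<alpha> z = (z$k) ^ \<alpha> k * (\<Prod>j\<in>UNIV - {k}. (z$j) ^ \<alpha> j)"
  unfolding mon_def by (subst prod.remove[of _ k]) auto

lemma mon_dec_var: "mon (\<alpha>(k := \<alpha> k - 1)) z = (z$k) ^ (\<alpha> k - 1) * (\<Prod>j\<in>UNIV - {k}. (z$j) ^ \<alpha> j)"
  by (subst mon_split_var[of _ _ k]) (auto intro!: prod.cong)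

lemma mon_line_deriv:
  "((\<lambda>s. mon \<alpha> (y + s *\<^sub>R v)) has_real_derivative
     (\<Sum>k\<in>UNIV. v$k * (real (\<alpha> k) * mon (\<alpha>(k := \<alpha> k - 1)) (y + s *\<^sub>R v)))) (at s)"
proof -
  have d: "((\<lambda>s. (y$j + s * v$j) ^ \<alpha> j) has_real_derivative
       real (\<alpha> j) * (v$j * (y$j + s * v$j) ^ (\<alpha> j - Suc 0))) (at s)" for j
    by (rule DERIV_power) (auto intro!: derivative_eq_intros)
  have "((\<lambda>s. \<Prod>j\<in>UNIV. (y$j + s * v$j) ^ \<alpha> j) has_real_derivative
     (\<Sum>k\<in>UNIV. real (\<alpha> k) * (v$k * (y$k + s * v$k) ^ (\<alpha> k - Suc 0)) * (\<Prod>j\<in>UNIV - {k}. (y$j + s * v$j) ^ \<alpha> j))) (at s)"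
    by (rule has_field_derivative_prod) (rule d)
  moreover have "(\<lambda>s. mon \<alpha> (y + s *\<^sub>R v)) = (\<lambda>s. \<Prod>j\<in>UNIV. (y$j + s * v$j) ^ \<alpha> j)"
    by (simp add: mon_def)
  moreover have "(\<Sum>k\<in>UNIV. real (\<alpha> k) * (v$k * (y$k + s * v$k) ^ (\<alpha> k - Suc 0)) * (\<Prod>j\<in>UNIV - {k}. (y$j + s * v$j) ^ \<alpha> j))
      = (\<Sum>k\<in>UNIV. v$k * (real (\<alpha> k) * mon (\<alpha>(k := \<alpha> k - 1)) (y + s *\<^sub>R v)))"
  proof (intro sum.cong refl)
    fix k
    have "(y$k + s * v$k)^(\<alpha> k - Suc 0) * (\<Prod> j\<in>UNIV-{k}. (y$j + s * v$j)^\<alpha> j) = mon (\<alpha>(k := \<alpha> k - 1)) (y + s *\<^sub>R v)"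
      using mon_dec_var[of \<alpha> k "y + s *\<^sub>R v"] by simp
    then show "real (\<alpha> k) * (v$k * (y$k + s * v$k) ^ (\<alpha> k - Suc 0)) * (\<Prod>j\<in>UNIV - {k}. (y$j + s * v$j) ^ \<alpha> j)
      = v$k * (real (\<alpha> k) * mon (\<alpha>(k := \<alpha> k - 1)) (y + s *\<^sub>R v))"
      by (simp add: mult_ac)
  qed
  ultimately show ?thesis by simp
qed

lemma peval_pdiff_eq_sum:
  assumes "is_mpoly c"
  shows "(\<Sum>\<alpha>\<in>{\<alpha>. c \<alpha> \<noteq> 0}. c \<alpha> * (real (\<alpha> k) * mon (\<alpha>(k := \<alpha> k - 1)) z)) = peval (pdiff k c) z"
proof -
  let ?S = "{\<alpha>. c \<alpha> \<noteq> 0}" and ?S1 = "{\<alpha>. c \<alpha> \<noteq> 0 \<and> \<alpha> k \<noteq> 0}" and ?T = "{\<beta>. pdiff k c \<beta> \<noteq> 0}"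
  have fS: "finite ?S" using assms by (simp add: is_mpoly_def)
  have "(\<Sum>\<alpha>\<in>?S. c \<alpha> * (real (\<alpha> k) * mon (\<alpha>(k := \<alpha> k - 1)) z)) = (\<Sum>\<alpha>\<in>?S1. c \<alpha> * (real (\<alpha> k) * mon (\<alpha>(k := \<alpha> k - 1)) z))"
    by (rule sum.mono_neutral_right) (use fS in auto)
  also have "\<dots> = (\<Sum>\<beta>\<in>?T. pdiff k c \<beta> * mon \<beta> z)"
  proof (rule sum.reindex_bij_witness[where i = "\<lambda>\<beta>. \<beta>(k := \<beta> k + 1)" and j = "\<lambda>\<alpha>. \<alpha>(k := \<alpha> k - 1)"])
    fix \<alpha> assume a: "\<alpha> \<in> ?S1"
    then show "(\<alpha>(k := \<alpha> k - 1))(k := (\<alpha>(k := \<alpha> k - 1)) k + 1) = \<alpha>" by auto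
    from a show "\<alpha>(k := \<alpha> k - 1) \<in> ?T"
      by (auto simp: pdiff_def)
    from a show "pdiff k c (\<alpha>(k := \<alpha> k - 1)) * mon (\<alpha>(k := \<alpha> k - 1)) z = c \<alpha> * (real (\<alpha> k) * mon (\<alpha>(k := \<alpha> k - 1)) z)"
      by (auto simp: pdiff_def of_nat_diff)
  next
    fix \<beta> assume b: "\<beta> \<in> ?T"
    then show "(\<beta>(k := \<beta> k + 1))(k := (\<beta>(k := \<beta> k + 1)) k - 1) = \<beta>" by auto
    from b show "\<beta>(k := \<beta> k + 1) \<in> ?S1" by (auto simp: pdiff_def)
  qed
  also have "\<dots> = peval (pdiff k c) z" by (simp add: peval_def)
  finally show ?thesis .
qed

lemma peval_line_deriv:
  assumes "is_mpoly c"
  shows "((\<lambda>s. peval c (y + s *\<^sub>R v)) has_real_derivative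
     (\<Sum>k\<in>UNIV. v$k * peval (pdiff k c) (y + s *\<^sub>R v))) (at s)"
proof -
  let ?S = "{\<alpha>. c \<alpha> \<noteq> 0}"
  have "((\<lambda>s. \<Sum>\<alpha>\<in>?S. c \<alpha> * mon \<alpha> (y + s *\<^sub>R v)) has_real_derivative
     (\<Sum>\<alpha>\<in>?S. c \<alpha> * (\<Sum>k\<in>UNIV. v$k * (real (\<alpha> k) * mon (\<alpha>(k := \<alpha> k - 1)) (y + s *\<^sub>R v))))) (at s)"
    by (intro DERIV_sum DERIV_cmult mon_line_deriv)
  moreover have "(\<Sum>\<alpha>\<in>?S. c \<alpha> * (\<Sum>k\<in>UNIV. v$k * (real (\<alpha> k) * mon (\<alpha>(k := \<alpha> k - 1)) (y + s *\<^sub>R v))))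
     = (\<Sum>k\<in>UNIV. v$k * peval (pdiff k c) (y + s *\<^sub>R v))"
    by (simp add: sum_distrib_left peval_pdiff_eq_sum[OF assms, symmetric] mult_ac sum.swap[of _ ?S])
  ultimately show ?thesis by (simp add: peval_def)
qed

lemma poly_fun_continuous: "poly_fun D f \<Longrightarrow> continuous_on UNIV f"
proof -
  assume "poly_fun D f"
  then obtain a where a: "\<And>x. f x = (\<Sum>\<alpha>\<in>exps D. a \<alpha> * mon \<alpha> x)" by (auto simp: poly_fun_def)
  have "continuous_on UNIV (\<lambda>x::real^'a. \<Sum>\<alpha>\<in>exps D. a \<alpha> * (\<Prod>j\<in>UNIV. (x$j) ^ \<alpha> j))"
    by (intro continuous_intros)
  moreover have "f = (\<lambda>x::real^'a. \<Sum>\<alpha>\<in>exps D. a \<alpha> * (\<Prod>j\<in>UNIV. (x$j) ^ \<alpha> j))"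
    by (simp add: a mon_def fun_eq_iff)
  ultimately show ?thesis by simp
qed

section \<open>Nonnegative univariate polynomials are sums of squares\<close>

text \<open>Variant of \<^const>\<open>sos_upoly\<close> over an arbitrary finite index set, which is closed under sums
  without reindexing.\<close>

definition sos_poly :: "nat \<Rightarrow> real poly \<Rightarrow> bool" where
  "sos_poly d p \<longleftrightarrow> (\<exists>(I::nat set) q. finite I \<and> (\<forall>i\<in>I. degree (q i) \<le> d) \<and> p = (\<Sum>i\<in>I. (q i)^2))"

lemma sos_poly_imp_sos_upoly: "sos_poly d p \<Longrightarrow> sos_upoly d p"
proof -
  assume "sos_poly d p"
  then obtain I :: "nat set" and q where I: "finite I" "\<forall>i\<in>I. degree (q i) \<le> d" "p = (\<Sum>i\<in>I. (q i)^2)"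
    unfolding sos_poly_def by blast
  from ex_bij_betw_nat_finite[OF I(1)] obtain h where h: "bij_betw h {0..<card I} I" by blast
  have "(\<Sum>k\<in>{0..<card I}. (q (h k))^2) = (\<Sum>i\<in>I. (q i)^2)"
    by (rule sum.reindex_bij_betw[OF h])
  then have e: "p = (\<Sum>k<card I. (q (h k))^2)" using I(3) by (simp add: atLeast0LessThan)
  have "\<forall>k<card I. degree (q (h k)) \<le> d" using h I(2) by (auto simp: bij_betw_def)
  with e show ?thesis unfolding sos_upoly_def
    by (intro exI[of _ "card I"] exI[of _ "\<lambda>k. q (h k)"]) simp
qed

lemma sos_poly_mono: "sos_poly d p \<Longrightarrow> d \<le> e \<Longrightarrow> sos_poly e p"
proof -
  assume "sos_poly d p" "d \<le> e"
  then obtain I :: "nat set" and q where I: "finite I" "\<forall>i\<in>I. degree (q i) \<le> d" "p = (\<Sum>i\<in>I. (q i)^2)"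
    unfolding sos_poly_def by blast
  then show ?thesis using \<open>d \<le> e\<close> unfolding sos_poly_def by (intro exI[of _ I] exI[of _ q]) auto
qed

lemma sos_poly_const: "c \<ge> 0 \<Longrightarrow> sos_poly 0 [:c:]"
  unfolding sos_poly_def
  by (intro exI[of _ "{0}"] exI[of _ "\<lambda>_. [:sqrt c:]"]) (auto simp: power2_eq_square)

lemma sos_poly_add:
  assumes "sos_poly d p" "sos_poly d q" shows "sos_poly d (p + q)"
proof -
  from assms(1) obtain I :: "nat set" and a where I: "finite I" "\<forall>i\<in>I. degree (a i) \<le> d" "p = (\<Sum>i\<in>I. (a i)^2)"
    unfolding sos_poly_def by blast
  from assms(2) obtain J :: "nat set" and b where J: "finite J" "\<forall>i\<in>J. degree (b i) \<le> d" "q = (\<Sum>i\<in>J. (b i)^2)"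
    unfolding sos_poly_def by blast
  define K where "K = (\<lambda>i. 2 * i) ` I \<union> (\<lambda>i. 2 * i + 1) ` J"
  define c where "c = (\<lambda>k::nat. if even k then a (k div 2) else b (k div 2))"
  have "2 * i \<noteq> 2 * j + (1::nat)" for i j by presburger
  then have disj: "(\<lambda>i. 2 * i) ` I \<inter> (\<lambda>i. 2 * i + 1) ` J = {}" by blast
  have "(\<Sum>k\<in>K. (c k)^2) = (\<Sum>k\<in>(\<lambda>i. 2 * i) ` I. (c k)^2) + (\<Sum>k\<in>(\<lambda>i. 2 * i + 1) ` J. (c k)^2)"
    unfolding K_def by (rule sum.union_disjoint) (use I J disj in auto)
  also have "(\<Sum>k\<in>(\<lambda>i. 2 * i) ` I. (c k)^2) = p"
    by (subst sum.reindex) (auto simp: inj_on_def c_def I(3))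
  also have "(\<Sum>k\<in>(\<lambda>i. 2 * i + 1) ` J. (c k)^2) = q"
    by (subst sum.reindex) (auto simp: inj_on_def c_def J(3))
  finally have "p + q = (\<Sum>k\<in>K. (c k)^2)" by simp
  moreover have "finite K" using I J by (simp add: K_def)
  moreover have "\<forall>k\<in>K. degree (c k) \<le> d" using I J by (auto simp: K_def c_def)
  ultimately show ?thesis unfolding sos_poly_def by (intro exI[of _ K] exI[of _ c]) simp
qed

lemma sos_poly_mult_sq:
  assumes "sos_poly d p" "degree l \<le> e" shows "sos_poly (d + e) (l^2 * p)"
proof -
  from assms(1) obtain I :: "nat set" and a where I: "finite I" "\<forall>i\<in>I. degree (a i) \<le> d" "p = (\<Sum>i\<in>I. (a i)^2)"
    unfolding sos_poly_def by blast
  have "l^2 * p = (\<Sum>i\<in>I. (l * a i)^2)" by (simp add: I(3) sum_distrib_left power_mult_distrib)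
  moreover have "\<forall>i\<in>I. degree (l * a i) \<le> d + e"
  proof
    fix i assume "i \<in> I"
    have "degree (l * a i) \<le> degree l + degree (a i)" by (rule degree_mult_le)
    then show "degree (l * a i) \<le> d + e" using I(2) \<open>i \<in> I\<close> assms(2) by fastforce
  qed
  ultimately show ?thesis using I(1) unfolding sos_poly_def by (intro exI[of _ I] exI[of _ "\<lambda>i. l * a i"]) simp
qed

lemma double_root_factor:
  fixes p :: "real poly"
  assumes "poly p a = 0" "poly (pderiv p) a = 0"
  shows "\<exists>q. p = [:-a, 1:]^2 * q"
proof -
  from assms(1) obtain q1 where q1: "p = [:-a, 1:] * q1" using poly_eq_0_iff_dvd by blast
  have "pderiv p = [:-a, 1:] * pderiv q1 + q1 * pderiv [:-a, 1:]" by (simp only: q1 pderiv_mult)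
  then have "poly (pderiv p) a = poly q1 a" by (simp add: pderiv_pCons)
  then have "poly q1 a = 0" using assms(2) by simp
  then obtain q2 where "q1 = [:-a, 1:] * q2" using poly_eq_0_iff_dvd by blast
  then show ?thesis using q1 by (metis power2_eq_square mult.assoc)
qed

lemma poly_bounded_halfline_const:
  fixes p :: "real poly"
  assumes "\<And>s. s \<ge> 0 \<Longrightarrow> \<bar>poly p s\<bar> \<le> B"
  shows "poly p s = poly p t"
proof (cases "degree p = 0")
  case True
  then obtain c where "p = [:c:]" by (meson degree_eq_zeroE)
  then show ?thesis by simp
next
  case False
  obtain a q where pq: "p = pCons a q" by (cases p) auto
  have "q \<noteq> 0" using False pq by auto
  from poly_infinity[OF this, of "B + 1" a] obtain r where r: "\<And>z::real. r \<le> norm z \<Longrightarrow> B + 1 \<le> norm (poly (pCons a q) z)" by blast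
  have "B + 1 \<le> \<bar>poly p \<bar>r\<bar>\<bar>" using r[of "\<bar>r\<bar>"] pq by simp
  moreover have "\<bar>poly p \<bar>r\<bar>\<bar> \<le> B" using assms[of "\<bar>r\<bar>"] by simp
  ultimately show ?thesis by simp
qed

lemma nonneg_poly_attains_min:
  fixes p :: "real poly"
  assumes "\<And>x. poly p x \<ge> 0"
  shows "\<exists>a. \<forall>x. poly p a \<le> poly p x"
proof (cases "degree p = 0")
  case True
  then obtain c where "p = [:c:]" by (meson degree_eq_zeroE)
  then show ?thesis by simp
next
  case False
  obtain a0 q where pq: "p = pCons a0 q" by (cases p) auto
  have "q \<noteq> 0" using False pq by auto
  from poly_infinity[OF this, of "poly p 0 + 1" a0] obtain r where
    r: "\<And>z::real. r \<le> norm z \<Longrightarrow> poly p 0 + 1 \<le> norm (poly (pCons a0 q) z)" by blast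
  have c1: "compact {-\<bar>r\<bar>..\<bar>r\<bar>}" by simp
  have c2: "{-\<bar>r\<bar>..\<bar>r\<bar>} \<noteq> {}" by simp
  have c3: "continuous_on {-\<bar>r\<bar>..\<bar>r\<bar>} (poly p)" by (rule continuous_on_poly) (rule continuous_on_id)
  from continuous_attains_inf[OF c1 c2 c3] obtain a where a: "a \<in> {-\<bar>r\<bar>..\<bar>r\<bar>}" "\<And>x. x \<in> {-\<bar>r\<bar>..\<bar>r\<bar>} \<Longrightarrow> poly p a \<le> poly p x"
    by blast
  have "poly p a \<le> poly p x" for x
  proof (cases "x \<in> {-\<bar>r\<bar>..\<bar>r\<bar>}")
    case True then show ?thesis using a by blast
  next
    case False
    then have "r \<le> norm x" by auto
    then have "poly p 0 + 1 \<le> \<bar>poly p x\<bar>" using r pq by simp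
    moreover have "poly p a \<le> poly p 0" using a(2)[of 0] by simp
    ultimately show ?thesis using assms[of x] by simp
  qed
  then show ?thesis by blast
qed

lemma nonneg_poly_double_root:
  fixes p :: "real poly"
  assumes nn: "\<And>x. 0 \<le> poly p x" and root: "poly p a = 0"
  obtains q where "p = [:-a, 1:]^2 * q" "\<And>x. 0 \<le> poly q x"
proof -
  have "poly (pderiv p) a = 0"
    using DERIV_local_min[OF poly_DERIV[of p a], of 1] root nn by auto
  from double_root_factor[OF root this] obtain q where q: "p = [:-a, 1:]^2 * q" by blast
  have q_nn_off: "0 \<le> poly q x" if "x \<noteq> a" for x
  proof -
    have "0 \<le> (x - a)^2 * poly q x" using nn[of x] by (simp add: q)
    then show ?thesis using that by (simp add: zero_le_mult_iff)
  qed
  have "0 \<le> poly q a"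
  proof -
    have "(\<lambda>n. poly q (a + inverse (real (Suc n)))) \<longlonglongrightarrow> poly q (a + 0)"
      by (intro tendsto_poly tendsto_add tendsto_const LIMSEQ_inverse_real_of_nat)
    moreover have "\<forall>n. 0 \<le> poly q (a + inverse (real (Suc n)))"
      by (intro allI q_nn_off) simp
    ultimately show ?thesis by (simp add: LIMSEQ_le_const)
  qed
  with q_nn_off have "0 \<le> poly q x" for x by (cases "x = a") auto
  with q that show thesis by blast
qed

lemma nonneg_poly_sos_poly:
  fixes p :: "real poly"
  shows "(\<And>x. 0 \<le> poly p x) \<Longrightarrow> sos_poly (degree p div 2) p"
proof (induction "degree p" arbitrary: p rule: less_induct)
  case less
  show ?case
  proof (cases "degree p = 0")
    case True
    then obtain c where c: "p = [:c:]" by (meson degree_eq_zeroE)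
    then have "c \<ge> 0" using less.prems[of 0] by simp
    then show ?thesis using c sos_poly_const True by simp
  next
    case False
    from nonneg_poly_attains_min[OF less.prems] obtain a where a: "\<And>x. poly p a \<le> poly p x" by blast
    define c where "c = poly p a"
    define p1 where "p1 = p - [:c:]"
    have "0 \<le> poly p1 x" for x using a[of x] by (simp add: p1_def c_def)
    moreover have "poly p1 a = 0" by (simp add: p1_def c_def)
    ultimately obtain q where q: "p1 = [:-a, 1:]^2 * q" and q_nn: "\<And>x. 0 \<le> poly q x"
      using nonneg_poly_double_root by blast
    have "p1 = p + [:-c:]" by (simp add: p1_def)
    then have deg_p1: "degree p1 = degree p" using False degree_add_eq_left[of "[:-c:]" p] by simp
    then have "q \<noteq> 0" using q False by auto
    then have deg_q: "degree p = 2 + degree q"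
      using q deg_p1 by (simp add: degree_mult_eq degree_power_eq)
    then have "sos_poly (degree q div 2) q" using less.hyps q_nn by simp
    then have "sos_poly (degree q div 2 + 1) p1" unfolding q by (rule sos_poly_mult_sq) simp
    moreover have "degree q div 2 + 1 = degree p div 2" using deg_q by presburger
    moreover have "sos_poly (degree p div 2) [:c:]"
      using less.prems[of a] sos_poly_const sos_poly_mono by (metis c_def zero_le)
    ultimately show ?thesis using sos_poly_add[of "degree p div 2" p1 "[:c:]"] by (simp add: p1_def)
  qed
qed

section \<open>Positive semidefinite quadratic forms and Taylor weights\<close>

definition quad_form :: "nat \<Rightarrow> (nat \<Rightarrow> nat \<Rightarrow> real) \<Rightarrow> (nat \<Rightarrow> real) \<Rightarrow> real" where
  "quad_form N W z = (\<Sum>a<N. \<Sum>b<N. z a * W a b * z b)"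

lemma quad_form_cong: "(\<And>a. a < N \<Longrightarrow> z a = z' a) \<Longrightarrow> quad_form N W z = quad_form N W z'"
  unfolding quad_form_def by (intro sum.cong refl) auto

lemma quad_form_Suc:
  assumes "\<And>a b. W a b = W b a"
  shows "quad_form (Suc N) W z = quad_form N W z + 2 * z N * (\<Sum>a<N. W a N * z a) + W N N * (z N)^2"
proof -
  have "quad_form (Suc N) W z = (\<Sum>a<N. (\<Sum>b<N. z a * W a b * z b) + z a * W a N * z N) + ((\<Sum>b<N. z N * W N b * z b) + z N * W N N * z N)"
    by (simp add: quad_form_def)
  also have "\<dots> = quad_form N W z + (\<Sum>a<N. z a * W a N * z N) + (\<Sum>b<N. z N * W N b * z b) + z N * W N N * z N"
    by (simp add: quad_form_def sum.distrib)
  also have "(\<Sum>b<N. z N * W N b * z b) = z N * (\<Sum>a<N. W a N * z a)"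
    using assms by (simp add: sum_distrib_left mult_ac)
  also have "(\<Sum>a<N. z a * W a N * z N) = z N * (\<Sum>a<N. W a N * z a)"
    by (simp add: sum_distrib_left mult_ac)
  finally show ?thesis by (simp add: power2_eq_square algebra_simps)
qed

lemma quad_form_sub:
  "quad_form N (\<lambda>a b. W a b - W a N * W b N / c) z = quad_form N W z - (\<Sum>a<N. W a N * z a)^2 / c"
proof -
  have "quad_form N (\<lambda>a b. W a b - W a N * W b N / c) z = quad_form N W z - (\<Sum>a<N. \<Sum>b<N. z a * (W a N * W b N / c) * z b)"
    by (simp add: quad_form_def algebra_simps sum_subtractf)
  also have "(\<Sum>a<N. \<Sum>b<N. z a * (W a N * W b N / c) * z b) = (\<Sum>a<N. W a N * z a) * (\<Sum>b<N. W b N * z b) / c"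
    by (simp add: sum_product sum_divide_distrib mult_ac)
  finally show ?thesis by (simp add: power2_eq_square)
qed

definition schur_compl :: "nat \<Rightarrow> (nat \<Rightarrow> nat \<Rightarrow> real) \<Rightarrow> nat \<Rightarrow> nat \<Rightarrow> real" where
  "schur_compl N W = (\<lambda>a b. W a b - W a N * W b N / W N N)"

lemma quad_form_Suc_schur_compl:
  assumes sym: "\<And>a b. W a b = W b a" and pos: "0 < W N N"
  shows "quad_form (Suc N) W z = quad_form N (schur_compl N W) z
    + ((\<Sum>a<N. W a N * z a) / sqrt (W N N) + sqrt (W N N) * z N)^2"
proof -
  define s where "s = (\<Sum>a<N. W a N * z a)"
  define c where "c = W N N"
  have "(s / sqrt c + sqrt c * z N)^2 = (s / sqrt c)^2 + 2 * (s / sqrt c) * (sqrt c * z N) + (sqrt c * z N)^2"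
    by (simp add: power2_eq_square algebra_simps)
  also have "(s / sqrt c)^2 = s^2 / c" using pos by (simp add: c_def power_divide)
  also have "2 * (s / sqrt c) * (sqrt c * z N) = 2 * z N * s" using pos by (simp add: c_def)
  also have "(sqrt c * z N)^2 = c * (z N)^2" using pos by (simp add: c_def power_mult_distrib)
  finally have "(s / sqrt c + sqrt c * z N)^2 = s^2 / c + 2 * z N * s + c * (z N)^2" .
  moreover have "quad_form N (schur_compl N W) z = quad_form N W z - s^2 / c"
    by (simp add: schur_compl_def quad_form_sub s_def c_def)
  ultimately show ?thesis by (simp add: quad_form_Suc[OF sym] s_def c_def)
qed

lemma psd_schur_compl:
  assumes sym: "\<And>a b. W a b = W b a" and pos: "0 < W N N" and psd: "\<And>z. 0 \<le> quad_form (Suc N) W z"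
  shows "0 \<le> quad_form N (schur_compl N W) z"
proof -
  define s where "s = (\<Sum>a<N. W a N * z a)"
  define z' where "z' = z(N := - s / W N N)"
  have "(\<Sum>a<N. W a N * z' a) = s" by (simp add: z'_def s_def)
  moreover have "sqrt (W N N) * (s / W N N) = s / sqrt (W N N)"
    using pos by (simp add: field_simps flip: real_sqrt_mult)
  ultimately have "quad_form (Suc N) W z' = quad_form N (schur_compl N W) z'"
    using quad_form_Suc_schur_compl[of W N z', OF sym pos] by (simp add: z'_def)
  also have "\<dots> = quad_form N (schur_compl N W) z"
    by (rule quad_form_cong) (simp add: z'_def)
  finally show ?thesis using psd[of z'] by simp
qed

lemma quad_form_Suc_zero_pivot:
  assumes sym: "\<And>a b. W a b = W b a" and psd: "\<And>z. 0 \<le> quad_form (Suc N) W z" and zero: "W N N = 0"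
  shows "quad_form (Suc N) W z = quad_form N W z"
proof -
  define s where "s = (\<Sum>a<N. W a N * z a)"
  have "s = 0"
  proof (rule ccontr)
    assume "s \<noteq> 0"
    define z' where "z' = z(N := - (quad_form N W z + 1) / (2 * s))"
    have "quad_form N W z' = quad_form N W z" by (rule quad_form_cong) (simp add: z'_def)
    moreover have "(\<Sum>a<N. W a N * z' a) = s" by (simp add: z'_def s_def)
    moreover have "2 * z' N * s = - (quad_form N W z + 1)"
      using \<open>s \<noteq> 0\<close> by (simp add: z'_def)
    ultimately have "quad_form (Suc N) W z' = -1"
      by (simp add: quad_form_Suc[OF sym] zero)
    with psd[of z'] show False by simp
  qed
  then show ?thesis by (simp add: quad_form_Suc[OF sym] zero s_def)
qed

lemma psd_quad_form_sum_squares: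
  "(\<And>a b. W a b = W b a) \<Longrightarrow> (\<And>z. 0 \<le> quad_form N W z) \<Longrightarrow>
    \<exists>B. \<forall>z. quad_form N W z = (\<Sum>k<N. (\<Sum>a<N. B k a * z a)^2)"
proof (induction N arbitrary: W)
  case 0 then show ?case by (simp add: quad_form_def)
next
  case (Suc N)
  note sym = Suc.prems(1) and psd = Suc.prems(2)
  have "0 \<le> W N N"
    using psd[of "\<lambda>i. if i = N then 1 else 0"] quad_form_cong[of N "\<lambda>i. if i = N then 1 else 0" "\<lambda>_. 0"]
    by (simp add: quad_form_Suc[OF sym] quad_form_def)
  then consider "0 < W N N" | "W N N = 0" by linarith
  then show ?case
  proof cases
    case 1
    define c where "c = W N N"
    have "schur_compl N W a b = schur_compl N W b a" for a b by (simp add: schur_compl_def sym mult.commute)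
    with Suc.IH obtain B' where B': "\<And>z. quad_form N (schur_compl N W) z = (\<Sum>k<N. (\<Sum>a<N. B' k a * z a)^2)"
      using psd_schur_compl[of W N, OF sym 1 psd] by blast
    define B where "B = (\<lambda>k a. if k < N then (if a < N then B' k a else 0)
                                else (if a = N then sqrt c else W a N / sqrt c))"
    have "(\<Sum>a<Suc N. B N a * z a) = (\<Sum>a<N. W a N * z a) / sqrt c + sqrt c * z N" for z
      by (simp add: B_def sum_divide_distrib)
    moreover have "(\<Sum>k<N. (\<Sum>a<Suc N. B k a * z a)^2) = quad_form N (schur_compl N W) z" for z
      by (simp add: B' B_def)
    ultimately have "quad_form (Suc N) W z = (\<Sum>k<Suc N. (\<Sum>a<Suc N. B k a * z a)^2)" for z
      by (simp add: quad_form_Suc_schur_compl[of W N, OF sym 1] c_def)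
    then show ?thesis by blast
  next
    case 2
    note zero_pivot = quad_form_Suc_zero_pivot[of W N, OF sym psd 2]
    have "0 \<le> quad_form N W z" for z using psd[of z] by (simp add: zero_pivot)
    then obtain B' where B': "\<And>z. quad_form N W z = (\<Sum>k<N. (\<Sum>a<N. B' k a * z a)^2)"
      using Suc.IH[of W] sym by blast
    define B where "B = (\<lambda>k a. if k < N \<and> a < N then B' k a else 0)"
    have "quad_form (Suc N) W z = (\<Sum>k<Suc N. (\<Sum>a<Suc N. B k a * z a)^2)" for z
      by (simp add: zero_pivot B' B_def)
    then show ?thesis by blast
  qed
qed

text \<open>\<^term>\<open>taylor_weight m\<close> is the integral of \<open>(1 - s) * s ^ m\<close> over \<open>[0, 1]\<close>, the kernel of the
  integral form of the second-order Taylor remainder.\<close>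

definition taylor_weight :: "nat \<Rightarrow> real" where
  "taylor_weight m = inverse (real (Suc m) * real (Suc (Suc m)))"

lemma taylor_weight_mult: "real (Suc m) * (real (Suc (Suc m)) * (c * taylor_weight m)) = c"
proof -
  have a: "real (Suc m) * real (Suc (Suc m)) \<noteq> 0" by simp
  have "real (Suc m) * (real (Suc (Suc m)) * (c * taylor_weight m)) = c * ((real (Suc m) * real (Suc (Suc m))) * inverse (real (Suc m) * real (Suc (Suc m))))"
    by (simp only: taylor_weight_def mult_ac)
  also have "\<dots> = c" using a by (metis right_inverse mult_1_right)
  finally show ?thesis .
qed

lemma taylor_weight_mult_right: "real (Suc m) * (real (Suc (Suc m)) * c) * taylor_weight m = c"
  by (simp only: mult.assoc taylor_weight_mult)

lemma taylor_remainder_eq_weighted_coeffs: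
  fixes \<phi> :: "real poly"
  assumes "degree \<phi> \<le> M"
  shows "poly \<phi> 1 - poly \<phi> 0 - poly (pderiv \<phi>) 0 = (\<Sum>m\<le>M. coeff (pderiv (pderiv \<phi>)) m * taylor_weight m)"
proof -
  have "poly \<phi> 1 = (\<Sum>i\<le>degree \<phi>. coeff \<phi> i)" by (simp add: poly_altdef)
  also have "\<dots> = (\<Sum>i\<le>Suc (Suc M). coeff \<phi> i)"
    by (rule sum.mono_neutral_left) (use assms in \<open>auto simp: coeff_eq_0\<close>)
  also have "\<dots> = coeff \<phi> 0 + coeff \<phi> 1 + (\<Sum>m\<le>M. coeff \<phi> (Suc (Suc m)))"
    by (simp only: sum.atMost_Suc_shift) simp
  finally have "poly \<phi> 1 - poly \<phi> 0 - poly (pderiv \<phi>) 0 = (\<Sum>m\<le>M. coeff \<phi> (Suc (Suc m)))"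
    by (simp add: poly_0_coeff_0 coeff_pderiv)
  also have "\<dots> = (\<Sum>m\<le>M. coeff (pderiv (pderiv \<phi>)) m * taylor_weight m)"
    by (intro sum.cong refl) (simp only: coeff_pderiv taylor_weight_mult_right)
  finally show ?thesis .
qed

lemma taylor_remainder_nonneg:
  fixes \<phi> :: "real poly"
  assumes "\<And>s. 0 \<le> poly (pderiv (pderiv \<phi>)) s"
  shows "0 \<le> poly \<phi> 1 - poly \<phi> 0 - poly (pderiv \<phi>) 0"
proof -
  have mono: "poly (pderiv \<phi>) 0 \<le> poly (pderiv \<phi>) s" if "0 \<le> s" for s
    by (rule DERIV_nonneg_imp_nondecreasing[OF that]) (use assms in \<open>auto intro: poly_DERIV\<close>)
  have "poly \<phi> 0 - 0 * poly (pderiv \<phi>) 0 \<le> poly \<phi> 1 - 1 * poly (pderiv \<phi>) 0"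
  proof (rule DERIV_nonneg_imp_nondecreasing[of 0 1 "\<lambda>s. poly \<phi> s - s * poly (pderiv \<phi>) 0"])
    fix x :: real assume "0 \<le> x" "x \<le> 1"
    show "\<exists>y. ((\<lambda>s. poly \<phi> s - s * poly (pderiv \<phi>) 0) has_real_derivative y) (at x) \<and> 0 \<le> y"
      by (rule exI[of _ "poly (pderiv \<phi>) x - poly (pderiv \<phi>) 0"])
         (use mono[OF \<open>0 \<le> x\<close>] in \<open>auto intro!: derivative_eq_intros poly_DERIV\<close>)
  qed simp
  then show ?thesis by simp
qed

lemma weighted_coeffs_square:
  fixes g :: "real poly"
  assumes "degree g \<le> N"
  shows "(\<Sum>m\<le>2*N. coeff (g*g) m * w m) = (\<Sum>a\<le>N. \<Sum>b\<le>N. coeff g a * coeff g b * w (a+b))"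
proof -
  have g: "g = (\<Sum>a\<le>N. monom (coeff g a) a)" using poly_as_sum_of_monoms'[OF assms] by simp
  have gg: "g * g = (\<Sum>a\<le>N. \<Sum>b\<le>N. monom (coeff g a * coeff g b) (a+b))"
    by (subst (1 2) g) (simp add: sum_product mult_monom)
  have inner: "(\<Sum>m\<le>2*N. (if a + b = m then X else 0) * w m) = X * w (a+b)" if "a \<le> N" "b \<le> N" for a b X
  proof -
    have "(\<Sum>m\<le>2*N. (if a + b = m then X else 0) * w m) = (\<Sum>m\<le>2*N. if m = a + b then X * w m else 0)"
      by (intro sum.cong) auto
    also have "\<dots> = X * w (a+b)" using that by (simp add: sum.delta)
    finally show ?thesis .
  qed
  have "(\<Sum>m\<le>2*N. coeff (g*g) m * w m) = (\<Sum>m\<le>2*N. \<Sum>a\<le>N. \<Sum>b\<le>N. (if a + b = m then coeff g a * coeff g b else 0) * w m)"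
    by (simp add: gg coeff_sum sum_distrib_right)
  also have "\<dots> = (\<Sum>a\<le>N. \<Sum>m\<le>2*N. \<Sum>b\<le>N. (if a + b = m then coeff g a * coeff g b else 0) * w m)"
    by (simp only: sum.swap[of _ "{..2*N}"])
  also have "\<dots> = (\<Sum>a\<le>N. \<Sum>b\<le>N. \<Sum>m\<le>2*N. (if a + b = m then coeff g a * coeff g b else 0) * w m)"
    by (simp only: sum.swap[of _ "{..2*N}"])
  also have "\<dots> = (\<Sum>a\<le>N. \<Sum>b\<le>N. coeff g a * coeff g b * w (a+b))"
    by (intro sum.cong refl) (simp add: inner)
  finally show ?thesis .
qed

lemma taylor_weight_hankel_psd:
  "0 \<le> (\<Sum>a\<le>N. \<Sum>b\<le>N. z a * z b * taylor_weight (a+b))"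
proof -
  define Z where "Z = (\<Sum>a\<le>N. monom (z a) a)"
  define \<phi> where "\<phi> = (\<Sum>a\<le>N. \<Sum>b\<le>N. monom (z a * z b * taylor_weight (a+b)) (a+b+2))"
  have ZZ: "Z * Z = (\<Sum>a\<le>N. \<Sum>b\<le>N. monom (z a * z b) (a+b))"
    by (simp add: Z_def sum_product mult_monom)
  have "pderiv (pderiv \<phi>) = Z * Z"
  proof (rule poly_eqI)
    fix m
    have "coeff (pderiv (pderiv \<phi>)) m = real (Suc m) * (real (Suc (Suc m)) * coeff \<phi> (Suc (Suc m)))"
      by (simp add: coeff_pderiv)
    also have "\<dots> = (\<Sum>a\<le>N. \<Sum>b\<le>N. if a + b = m then z a * z b else 0)"
      unfolding \<phi>_def coeff_sum sum_distrib_left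
    proof (intro sum.cong refl)
      fix a b
      show "real (Suc m) * (real (Suc (Suc m)) * coeff (monom (z a * z b * taylor_weight (a + b)) (a + b + 2)) (Suc (Suc m)))
         = (if a + b = m then z a * z b else 0)"
      proof (cases "a + b = m")
        case True
        then have "coeff (monom (z a * z b * taylor_weight (a + b)) (a + b + 2)) (Suc (Suc m)) = z a * z b * taylor_weight m" by simp
        then show ?thesis using True by (simp only: taylor_weight_mult) simp
      next
        case False
        then show ?thesis by simp
      qed
    qed
    also have "\<dots> = coeff (Z * Z) m" by (simp add: ZZ coeff_sum)
    finally show "coeff (pderiv (pderiv \<phi>)) m = coeff (Z * Z) m" .
  qed
  then have "0 \<le> poly \<phi> 1 - poly \<phi> 0 - poly (pderiv \<phi>) 0"
    by (intro taylor_remainder_nonneg) simp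
  moreover have "poly \<phi> 1 = (\<Sum>a\<le>N. \<Sum>b\<le>N. z a * z b * taylor_weight (a+b))"
    by (simp add: \<phi>_def poly_sum poly_monom)
  moreover have "poly \<phi> 0 = 0" by (simp add: \<phi>_def poly_sum poly_monom)
  moreover have "poly (pderiv \<phi>) 0 = 0" by (simp add: poly_0_coeff_0 coeff_pderiv \<phi>_def coeff_sum)
  ultimately show ?thesis by simp
qed

lemma taylor_weight_hankel_factor:
  "\<exists>B. \<forall>z. (\<Sum>a\<le>N. \<Sum>b\<le>N. z a * z b * taylor_weight (a+b)) = (\<Sum>k<Suc N. (\<Sum>a<Suc N. B k a * z a)^2)"
proof -
  define W where "W = (\<lambda>a b. taylor_weight (a + b))"
  have W: "quad_form (Suc N) W z = (\<Sum>a\<le>N. \<Sum>b\<le>N. z a * z b * taylor_weight (a+b))" for z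
    by (simp add: quad_form_def W_def lessThan_Suc_atMost mult_ac)
  have "\<exists>B. \<forall>z. quad_form (Suc N) W z = (\<Sum>k<Suc N. (\<Sum>a<Suc N. B k a * z a)^2)"
  proof (rule psd_quad_form_sum_squares)
    show "W a b = W b a" for a b by (simp add: W_def add.commute)
    show "0 \<le> quad_form (Suc N) W z" for z unfolding W by (rule taylor_weight_hankel_psd)
  qed
  then show ?thesis by (simp add: W)
qed

lemma taylor_remainder_sum_squares:
  fixes \<phi> :: "real poly" and G :: "nat \<Rightarrow> real poly"
  assumes deg: "degree \<phi> \<le> 2 * N" and G: "pderiv (pderiv \<phi>) = (\<Sum>t<K. (G t)^2)"
    and deg_G: "\<And>t. t < K \<Longrightarrow> degree (G t) \<le> N"
    and B: "\<And>z. (\<Sum>a\<le>N. \<Sum>b\<le>N. z a * z b * taylor_weight (a+b)) = (\<Sum>k<Suc N. (\<Sum>a<Suc N. B k a * z a)^2)"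
  shows "poly \<phi> 1 - poly \<phi> 0 - poly (pderiv \<phi>) 0 = (\<Sum>t<K. \<Sum>k<Suc N. (\<Sum>a<Suc N. B k a * coeff (G t) a)^2)"
proof -
  have "poly \<phi> 1 - poly \<phi> 0 - poly (pderiv \<phi>) 0 = (\<Sum>m\<le>2*N. coeff (pderiv (pderiv \<phi>)) m * taylor_weight m)"
    by (rule taylor_remainder_eq_weighted_coeffs[OF deg])
  also have "\<dots> = (\<Sum>t<K. \<Sum>m\<le>2*N. coeff (G t * G t) m * taylor_weight m)"
    by (simp add: G coeff_sum sum_distrib_right power2_eq_square) (rule sum.swap)
  also have "\<dots> = (\<Sum>t<K. \<Sum>a\<le>N. \<Sum>b\<le>N. coeff (G t) a * coeff (G t) b * taylor_weight (a+b))"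
    by (intro sum.cong refl weighted_coeffs_square deg_G) simp
  also have "\<dots> = (\<Sum>t<K. \<Sum>k<Suc N. (\<Sum>a<Suc N. B k a * coeff (G t) a)^2)"
    by (simp add: B)
  finally show ?thesis .
qed

section \<open>Sums of squares of polynomial functions\<close>

definition sos_fun :: "nat \<Rightarrow> (real^'n::finite \<Rightarrow> real) \<Rightarrow> bool" where
  "sos_fun r \<sigma> \<longleftrightarrow> (\<exists>(I::nat set) q. finite I \<and> (\<forall>i\<in>I. poly_fun r (q i)) \<and> (\<forall>x. \<sigma> x = (\<Sum>i\<in>I. (q i x)^2)))"

lemma sos_funI: "finite (I::nat set) \<Longrightarrow> (\<And>i. i \<in> I \<Longrightarrow> poly_fun r (q i)) \<Longrightarrow> (\<And>x. \<sigma> x = (\<Sum>i\<in>I. (q i x)^2)) \<Longrightarrow> sos_fun r \<sigma>"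
  unfolding sos_fun_def by blast

lemma sos_fun_cong: "sos_fun r \<sigma> \<Longrightarrow> (\<And>x. \<sigma> x = \<tau> x) \<Longrightarrow> sos_fun r \<tau>"
  unfolding sos_fun_def by simp

lemma sos_fun_sq: "poly_fun r f \<Longrightarrow> sos_fun r (\<lambda>x. (f x)^2)"
  by (rule sos_funI[of "{0}" r "\<lambda>_. f"]) auto

lemma sos_fun_zero: "sos_fun r (\<lambda>x. 0)"
  by (rule sos_funI[of "{}"]) auto

lemma sos_fun_const: "0 \<le> c \<Longrightarrow> sos_fun r (\<lambda>x. c)"
  using sos_fun_sq[OF poly_fun_const[of r "sqrt c"]] by (rule sos_fun_cong) simp

lemma sos_fun_add:
  assumes "sos_fun r \<sigma>" "sos_fun r \<tau>" shows "sos_fun r (\<lambda>x. \<sigma> x + \<tau> x)"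
proof -
  from assms(1) obtain I :: "nat set" and a where I: "finite I" "\<forall>i\<in>I. poly_fun r (a i)" "\<And>x. \<sigma> x = (\<Sum>i\<in>I. (a i x)^2)"
    unfolding sos_fun_def by blast
  from assms(2) obtain J :: "nat set" and b where J: "finite J" "\<forall>i\<in>J. poly_fun r (b i)" "\<And>x. \<tau> x = (\<Sum>i\<in>J. (b i x)^2)"
    unfolding sos_fun_def by blast
  define K where "K = (\<lambda>i. 2 * i) ` I \<union> (\<lambda>i. 2 * i + 1) ` J"
  define c where "c = (\<lambda>k::nat. if even k then a (k div 2) else b (k div 2))"
  have "2 * i \<noteq> 2 * j + (1::nat)" for i j by presburger
  then have disj: "(\<lambda>i. 2 * i) ` I \<inter> (\<lambda>i. 2 * i + 1) ` J = {}" by blast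
  show ?thesis
  proof (rule sos_funI[of K r c])
    show "finite K" using I J by (simp add: K_def)
    show "poly_fun r (c k)" if "k \<in> K" for k using that I J by (auto simp: K_def c_def)
    fix x
    have "(\<Sum>k\<in>K. (c k x)^2) = (\<Sum>k\<in>(\<lambda>i. 2 * i) ` I. (c k x)^2) + (\<Sum>k\<in>(\<lambda>i. 2 * i + 1) ` J. (c k x)^2)"
      unfolding K_def by (rule sum.union_disjoint) (use I J disj in auto)
    also have "(\<Sum>k\<in>(\<lambda>i. 2 * i) ` I. (c k x)^2) = \<sigma> x"
      by (subst sum.reindex) (auto simp: inj_on_def c_def I(3))
    also have "(\<Sum>k\<in>(\<lambda>i. 2 * i + 1) ` J. (c k x)^2) = \<tau> x"
      by (subst sum.reindex) (auto simp: inj_on_def c_def J(3))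
    finally show "\<sigma> x + \<tau> x = (\<Sum>k\<in>K. (c k x)^2)" by simp
  qed
qed

lemma sos_fun_sum: "finite S \<Longrightarrow> (\<And>s. s \<in> S \<Longrightarrow> sos_fun r (\<sigma> s)) \<Longrightarrow> sos_fun r (\<lambda>x. \<Sum>s\<in>S. \<sigma> s x)"
proof (induction S rule: finite_induct)
  case empty then show ?case using sos_fun_zero by simp
next
  case (insert s S) then show ?case using sos_fun_add[of r "\<sigma> s" "\<lambda>x. \<Sum>s\<in>S. \<sigma> s x"] by simp
qed

lemma sos_fun_cmult: "0 \<le> c \<Longrightarrow> sos_fun r \<sigma> \<Longrightarrow> sos_fun r (\<lambda>x. c * \<sigma> x)"
proof -
  assume "0 \<le> c" "sos_fun r \<sigma>"
  from \<open>sos_fun r \<sigma>\<close> obtain I :: "nat set" and a where I: "finite I" "\<forall>i\<in>I. poly_fun r (a i)" "\<And>x. \<sigma> x = (\<Sum>i\<in>I. (a i x)^2)"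
    unfolding sos_fun_def by blast
  show ?thesis
  proof (rule sos_funI[of I r "\<lambda>i x. sqrt c * a i x"])
    show "finite I" by fact
    show "poly_fun r (\<lambda>x. sqrt c * a i x)" if "i \<in> I" for i using I(2) that by (simp add: poly_fun_cmult)
    fix x show "c * \<sigma> x = (\<Sum>i\<in>I. (sqrt c * a i x)^2)"
      using \<open>0 \<le> c\<close> by (simp add: I(3) sum_distrib_left power_mult_distrib)
  qed
qed

lemma sos_fun_sos_mpoly: "sos_fun r \<sigma> \<Longrightarrow> sos_mpoly r \<sigma>"
proof -
  assume "sos_fun r \<sigma>"
  then obtain I :: "nat set" and q where I: "finite I" "\<forall>i\<in>I. poly_fun r (q i)" "\<And>x. \<sigma> x = (\<Sum>i\<in>I. (q i x)^2)"
    unfolding sos_fun_def by blast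
  from ex_bij_betw_nat_finite[OF I(1)] obtain h where h: "bij_betw h {0..<card I} I" by blast
  define qc where "qc = (\<lambda>k. SOME c. mpoly_deg_le r c \<and> is_mpoly c \<and> (\<forall>x. q (h k) x = peval c x))"
  have qc: "mpoly_deg_le r (qc k) \<and> is_mpoly (qc k) \<and> (\<forall>x. q (h k) x = peval (qc k) x)" if "k < card I" for k
  proof -
    have "h k \<in> I" using h that by (auto simp: bij_betw_def)
    then have "poly_fun r (q (h k))" using I(2) by blast
    from poly_fun_imp_peval[OF this] show ?thesis unfolding qc_def by (rule someI_ex)
  qed
  have "\<sigma> x = (\<Sum>k<card I. (peval (qc k) x)^2)" for x
  proof -
    have "(\<Sum>k\<in>{0..<card I}. (q (h k) x)^2) = (\<Sum>i\<in>I. (q i x)^2)"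
      by (rule sum.reindex_bij_betw[OF h])
    moreover have "(\<Sum>k\<in>{0..<card I}. (q (h k) x)^2) = (\<Sum>k<card I. (peval (qc k) x)^2)"
      using qc by (simp add: atLeast0LessThan)
    ultimately show ?thesis using I(3) by simp
  qed
  then show ?thesis unfolding sos_mpoly_def using qc by blast
qed

lemma mon_scale: "mon \<alpha> (t *\<^sub>R x) = t ^ (sum \<alpha> UNIV) * mon \<alpha> x"
  by (simp add: mon_def power_mult_distrib prod.distrib power_sum)

lemma coeff_square_top:
  fixes P :: "real poly"
  assumes "degree P \<le> n"
  shows "coeff (P * P) (2 * n) = (coeff P n)^2"
proof (cases "degree P = n")
  case True
  then show ?thesis using coeff_mult_degree_sum[of P P] by (simp add: power2_eq_square mult_2)
next
  case False
  then have "degree P < n" using assms by simp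
  then have "coeff P n = 0" by (simp add: coeff_eq_0)
  moreover have "degree (P * P) < 2 * n"
    using degree_mult_le[of P P] \<open>degree P < n\<close> by linarith
  ultimately show ?thesis by (simp add: coeff_eq_0)
qed

definition ray_poly :: "nat \<Rightarrow> (('n::finite \<Rightarrow> nat) \<Rightarrow> real) \<Rightarrow> real^'n \<Rightarrow> real poly" where
  "ray_poly D a x = (\<Sum>\<alpha>\<in>exps D. monom (a \<alpha> * mon \<alpha> x) (sum \<alpha> UNIV))"

lemma poly_ray_poly: "poly (ray_poly D a x) t = (\<Sum>\<alpha>\<in>exps D. a \<alpha> * mon \<alpha> (t *\<^sub>R x))"
  by (simp add: ray_poly_def poly_sum poly_monom mon_scale mult_ac)

lemma degree_ray_poly: "degree (ray_poly D a x) \<le> D"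
  unfolding ray_poly_def
  by (rule degree_sum_le[OF finite_exps]) (auto simp: exps_def intro: order_trans[OF degree_monom_le])

lemma coeff_ray_poly:
  "coeff (ray_poly D a x) n = (\<Sum>\<alpha>\<in>{\<alpha>\<in>exps D. sum \<alpha> UNIV = n}. a \<alpha> * mon \<alpha> x)"
  by (simp add: ray_poly_def coeff_sum sum.inter_filter if_distrib cong: if_cong)

text \<open>Restricting to the ray through \<open>x\<close>, the coefficient of \<open>t ^ (2 * Suc E)\<close> in the sum of squares
  is the sum of the squares of the top homogeneous parts, and it vanishes for degree reasons.\<close>

lemma sum_squares_top_forms_vanish:
  assumes I: "finite I" and i: "i \<in> I" and DE: "D \<le> E"
    and f: "poly_fun (2 * D) (\<lambda>x. \<Sum>i\<in>I. (\<Sum>\<alpha>\<in>exps (Suc E). A i \<alpha> * mon \<alpha> x)^2)"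
  shows "(\<Sum>\<alpha>\<in>{\<alpha>\<in>exps (Suc E). sum \<alpha> UNIV = Suc E}. A i \<alpha> * mon \<alpha> (x::real^'n::finite)) = 0"
proof -
  from f obtain b where b: "\<And>x. (\<Sum>i\<in>I. (\<Sum>\<alpha>\<in>exps (Suc E). A i \<alpha> * mon \<alpha> x)^2) = (\<Sum>\<alpha>\<in>exps (2 * D). b \<alpha> * mon \<alpha> x)"
    by (auto simp: poly_fun_def)
  have "poly (\<Sum>i\<in>I. ray_poly (Suc E) (A i) x ^ 2) t = poly (ray_poly (2 * D) b x) t" for t
    by (simp add: poly_sum poly_ray_poly b)
  then have eq: "(\<Sum>i\<in>I. ray_poly (Suc E) (A i) x ^ 2) = ray_poly (2 * D) b x"
    by (simp add: poly_eq_poly_eq_iff[symmetric] fun_eq_iff)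
  have "coeff (ray_poly (2 * D) b x) (2 * Suc E) = 0"
    using degree_ray_poly[of "2 * D" b x] DE by (intro coeff_eq_0) simp
  moreover have "coeff (ray_poly (Suc E) (A i) x ^ 2) (2 * Suc E) = (coeff (ray_poly (Suc E) (A i) x) (Suc E))^2" for i
    using coeff_square_top[OF degree_ray_poly, of "Suc E" "A i" x] by (simp only: power2_eq_square)
  ultimately have "(\<Sum>i\<in>I. (coeff (ray_poly (Suc E) (A i) x) (Suc E))^2) = 0"
    using arg_cong[OF eq, of "\<lambda>p. coeff p (2 * Suc E)"] by (simp add: coeff_sum)
  then show ?thesis using I i by (simp add: sum_nonneg_eq_0_iff coeff_ray_poly)
qed

lemma sum_squares_degree_step:
  fixes q :: "nat \<Rightarrow> real^'n::finite \<Rightarrow> real"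
  assumes I: "finite I" and q: "\<forall>i\<in>I. poly_fun (Suc E) (q i)" and f: "poly_fun (2 * D) (\<lambda>x. \<Sum>i\<in>I. (q i x)^2)"
    and DE: "D \<le> E"
  shows "\<forall>i\<in>I. poly_fun E (q i)"
proof
  fix i assume i: "i \<in> I"
  from q have "\<forall>i\<in>I. \<exists>a. \<forall>x. q i x = (\<Sum>\<alpha>\<in>exps (Suc E). a \<alpha> * mon \<alpha> x)" by (simp add: poly_fun_def)
  then obtain A where A: "\<And>i x. i \<in> I \<Longrightarrow> q i x = (\<Sum>\<alpha>\<in>exps (Suc E). A i \<alpha> * mon \<alpha> x)"
    by metis
  define T where "T = {\<alpha>\<in>(exps (Suc E) :: ('n \<Rightarrow> nat) set). sum \<alpha> UNIV = Suc E}"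
  have "poly_fun (2 * D) (\<lambda>x. \<Sum>i\<in>I. (\<Sum>\<alpha>\<in>exps (Suc E). A i \<alpha> * mon \<alpha> x)^2)"
    using f by (rule poly_fun_cong) (simp add: A)
  then have "(\<Sum>\<alpha>\<in>T. A i \<alpha> * mon \<alpha> x) = 0" for x
    unfolding T_def using sum_squares_top_forms_vanish[OF I i DE] by blast
  then have A0: "A i \<alpha> = 0" if "\<alpha> \<in> T" for \<alpha>
    using mon_sum_eq_0_imp_coeff_0[of T "A i" \<alpha>] that by (simp add: T_def)
  have "q i x = (\<Sum>\<alpha>\<in>exps E. A i \<alpha> * mon \<alpha> x)" for x
  proof -
    have "q i x = (\<Sum>\<alpha>\<in>exps (Suc E). A i \<alpha> * mon \<alpha> x)" by (rule A[OF i])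
    also have "\<dots> = (\<Sum>\<alpha>\<in>exps E. A i \<alpha> * mon \<alpha> x)"
    proof (rule sum.mono_neutral_right)
      show "exps E \<subseteq> exps (Suc E)" by (rule exps_mono) simp
      show "\<forall>\<alpha>\<in>exps (Suc E) - exps E. A i \<alpha> * mon \<alpha> x = 0"
        using A0 by (auto simp: T_def exps_def)
    qed simp
    finally show ?thesis .
  qed
  then show "poly_fun E (q i)" unfolding poly_fun_def by blast
qed

lemma sum_squares_degree_bound:
  fixes q :: "nat \<Rightarrow> real^'n::finite \<Rightarrow> real"
  shows "finite I \<Longrightarrow> \<forall>i\<in>I. poly_fun E (q i) \<Longrightarrow> poly_fun (2 * D) (\<lambda>x. \<Sum>i\<in>I. (q i x)^2) \<Longrightarrow> \<forall>i\<in>I. poly_fun D (q i)"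
proof (induction E)
  case 0 then show ?case by (auto intro: poly_fun_mono)
next
  case (Suc E)
  show ?case
  proof (cases "D \<le> E")
    case True
    from sum_squares_degree_step[OF Suc.prems(1,2,3) True] have "\<forall>i\<in>I. poly_fun E (q i)" .
    then show ?thesis using Suc.IH Suc.prems by blast
  next
    case False
    then show ?thesis using Suc.prems(2) by (auto intro: poly_fun_mono)
  qed
qed

lemma sos_fun_degree_bound: "sos_fun E \<sigma> \<Longrightarrow> poly_fun (2 * D) \<sigma> \<Longrightarrow> sos_fun D \<sigma>"
proof -
  assume "sos_fun E \<sigma>" "poly_fun (2 * D) \<sigma>"
  from \<open>sos_fun E \<sigma>\<close> obtain I :: "nat set" and q where I: "finite I" "\<forall>i\<in>I. poly_fun E (q i)" "\<And>x. \<sigma> x = (\<Sum>i\<in>I. (q i x)^2)"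
    unfolding sos_fun_def by blast
  have "poly_fun (2 * D) (\<lambda>x. \<Sum>i\<in>I. (q i x)^2)" using \<open>poly_fun (2 * D) \<sigma>\<close> I(3) by (simp add: poly_fun_cong)
  from sum_squares_degree_bound[OF I(1,2) this] have "\<forall>i\<in>I. poly_fun D (q i)" .
  then show ?thesis using I by (intro sos_funI[of I D q]) auto
qed

lemma mpoly_deg_le_mono: "mpoly_deg_le D c \<Longrightarrow> D \<le> E \<Longrightarrow> mpoly_deg_le E c"
  using exps_mono by (fastforce simp: mpoly_deg_le_def)

lemma pdiff_deg_0: "mpoly_deg_le 0 c \<Longrightarrow> pdiff k c = (\<lambda>_. 0)"
proof
  fix \<beta> assume d0: "mpoly_deg_le 0 c"
  have "c (\<beta>(k := \<beta> k + 1)) = 0"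
  proof (rule ccontr)
    assume "c (\<beta>(k := \<beta> k + 1)) \<noteq> 0"
    then have "\<beta>(k := \<beta> k + 1) \<in> exps 0" using d0 by (auto simp: mpoly_deg_le_def)
    moreover have "(\<beta>(k := \<beta> k + 1)) k \<le> sum (\<beta>(k := \<beta> k + 1)) UNIV" by (rule member_le_sum) auto
    ultimately show False by (simp add: exps_def)
  qed
  then show "pdiff k c \<beta> = 0" by (simp add: pdiff_def)
qed

lemma hessian_gram_sum_squares:
  fixes v :: "real^'n::finite"
  shows "(\<Sum>k\<in>UNIV. v$k * (\<Sum>l\<in>UNIV. v$l * (\<Sum>t<K. Fv t l * Fv t k))) = (\<Sum>t<K. (\<Sum>k\<in>UNIV. v$k * Fv t k)^2)"
proof -
  have "(\<Sum>t<K. (\<Sum>k\<in>UNIV. v$k * Fv t k)^2) = (\<Sum>t<K. \<Sum>k\<in>UNIV. \<Sum>l\<in>UNIV. v$k * Fv t k * (v$l * Fv t l))"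
    by (simp only: power2_eq_square sum_product)
  also have "\<dots> = (\<Sum>k\<in>UNIV. \<Sum>l\<in>UNIV. \<Sum>t<K. v$k * Fv t k * (v$l * Fv t l))"
    by (simp only: sum.swap[of _ "{..<K}"])
  also have "\<dots> = (\<Sum>k\<in>UNIV. v$k * (\<Sum>l\<in>UNIV. v$l * (\<Sum>t<K. Fv t l * Fv t k)))"
    by (simp add: sum_distrib_left mult_ac)
  finally show ?thesis by simp
qed

lemma poly_fun_coord_diff: "poly_fun 1 (\<lambda>x::real^'n::finite. (x - y)$k)"
  using poly_fun_diff[OF poly_fun_coord[of k] poly_fun_const[of 1 "y$k"]] by simp

lemma poly_pderiv_line_poly:
  assumes "is_mpoly c"
  shows "poly (pderiv (line_poly {\<alpha>. c \<alpha> \<noteq> 0} c y v)) s = (\<Sum>k\<in>UNIV. v$k * peval (pdiff k c) (y + s *\<^sub>R v))"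
proof -
  have "poly (line_poly {\<alpha>. c \<alpha> \<noteq> 0} c y v) = (\<lambda>s. peval c (y + s *\<^sub>R v))"
    using peval_line_poly[OF assms] by (simp add: fun_eq_iff)
  then have "DERIV (poly (line_poly {\<alpha>. c \<alpha> \<noteq> 0} c y v)) s :> (\<Sum>k\<in>UNIV. v$k * peval (pdiff k c) (y + s *\<^sub>R v))"
    using peval_line_deriv[OF assms] by simp
  then show ?thesis using poly_DERIV DERIV_unique by blast
qed

lemma line_poly_second_pderiv_sos:
  assumes c: "is_mpoly c" and F: "\<forall>t<K. \<forall>k. is_mpoly (F t k)"
    and hess: "\<forall>k l x. peval (pdiff k (pdiff l c)) x = (\<Sum>t<K. peval (F t k) x * peval (F t l) x)"
  shows "pderiv (pderiv (line_poly {\<alpha>. c \<alpha> \<noteq> 0} c y v))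
    = (\<Sum>t<K. (\<Sum>k\<in>UNIV. smult (v$k) (line_poly {\<alpha>. F t k \<alpha> \<noteq> 0} (F t k) y v))^2)"
    (is "pderiv (pderiv ?\<phi>) = (\<Sum>t<K. (?G t)^2)")
proof -
  have "poly (pderiv (pderiv ?\<phi>)) s = poly (\<Sum>t<K. (?G t)^2) s" for s
  proof -
    have "poly (pderiv ?\<phi>) = (\<lambda>s. \<Sum>k\<in>UNIV. v$k * peval (pdiff k c) (y + s *\<^sub>R v))"
      using poly_pderiv_line_poly[OF c] by (simp add: fun_eq_iff)
    then have "DERIV (poly (pderiv ?\<phi>)) s :> (\<Sum>k\<in>UNIV. v$k * (\<Sum>l\<in>UNIV. v$l * peval (pdiff l (pdiff k c)) (y + s *\<^sub>R v)))"
      by (simp only:) (intro DERIV_sum DERIV_cmult peval_line_deriv is_mpoly_pdiff c)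
    then have "poly (pderiv (pderiv ?\<phi>)) s = (\<Sum>k\<in>UNIV. v$k * (\<Sum>l\<in>UNIV. v$l * peval (pdiff l (pdiff k c)) (y + s *\<^sub>R v)))"
      using poly_DERIV DERIV_unique by blast
    also have "\<dots> = (\<Sum>k\<in>UNIV. v$k * (\<Sum>l\<in>UNIV. v$l * (\<Sum>t<K. peval (F t l) (y + s *\<^sub>R v) * peval (F t k) (y + s *\<^sub>R v))))"
      using hess by simp
    also have "\<dots> = (\<Sum>t<K. (\<Sum>k\<in>UNIV. v$k * peval (F t k) (y + s *\<^sub>R v))^2)"
      by (rule hessian_gram_sum_squares)
    also have "\<dots> = poly (\<Sum>t<K. (?G t)^2) s"
      unfolding poly_sum using F by (intro sum.cong refl) (simp add: poly_sum peval_line_poly)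
    finally show ?thesis .
  qed
  then show ?thesis by (simp add: poly_eq_poly_eq_iff[symmetric] fun_eq_iff)
qed

lemma sos_convex_obtain_factors:
  fixes c :: "('n::finite \<Rightarrow> nat) \<Rightarrow> real"
  assumes "sos_convex c"
  obtains K and F :: "nat \<Rightarrow> 'n \<Rightarrow> ('n \<Rightarrow> nat) \<Rightarrow> real" and E
  where "\<forall>t<K. \<forall>k. is_mpoly (F t k) \<and> mpoly_deg_le E (F t k)"
    and "\<forall>k l x. peval (pdiff k (pdiff l c)) x = (\<Sum>t<K. peval (F t k) x * peval (F t l) x)"
proof -
  obtain K and F :: "nat \<Rightarrow> 'n \<Rightarrow> ('n \<Rightarrow> nat) \<Rightarrow> real" where F: "\<forall>t<K. \<forall>k. is_mpoly (F t k)"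
    and hess: "\<forall>k l x. peval (pdiff k (pdiff l c)) x = (\<Sum>t<K. peval (F t k) x * peval (F t l) x)"
    using assms unfolding sos_convex_def by blast
  have "\<forall>tk\<in>{..<K} \<times> (UNIV::'n set). \<exists>D. mpoly_deg_le D (F (fst tk) (snd tk))"
    using F is_mpoly_imp_deg_le by auto
  then obtain Dg where Dg: "\<And>tk. tk \<in> {..<K} \<times> (UNIV::'n set) \<Longrightarrow> mpoly_deg_le (Dg tk) (F (fst tk) (snd tk))"
    by metis
  define E where "E = (\<Sum>tk\<in>{..<K} \<times> (UNIV::'n set). Dg tk)"
  have "mpoly_deg_le E (F t k)" if "t < K" for t k
  proof -
    have "Dg (t,k) \<le> E" unfolding E_def by (rule member_le_sum) (use that in auto)
    then show ?thesis using Dg[of "(t,k)"] that mpoly_deg_le_mono by auto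
  qed
  with F hess that show thesis by blast
qed

lemma poly_fun_tangent_gap:
  assumes deg: "mpoly_deg_le (2*r) c"
  shows "poly_fun (2*r) (\<lambda>x. peval c x - peval c y - (\<Sum>k\<in>UNIV. (x$k - y$k) * peval (pdiff k c) y))"
proof -
  have "poly_fun (2 * r) (\<lambda>x. \<Sum>k\<in>UNIV. (x$k - y$k) * peval (pdiff k c) y)"
  proof (cases "r = 0")
    case True
    then have "pdiff k c = (\<lambda>_. 0)" for k using deg pdiff_deg_0 by simp
    then show ?thesis by (simp add: poly_fun_const peval_def)
  next
    case False
    have "poly_fun 1 (\<lambda>x. \<Sum>k\<in>UNIV. peval (pdiff k c) y * (x - y)$k)"
      by (intro poly_fun_sum poly_fun_cmult poly_fun_coord_diff) simp
    then have "poly_fun (2 * r) (\<lambda>x. \<Sum>k\<in>UNIV. peval (pdiff k c) y * (x - y)$k)"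
      by (rule poly_fun_mono) (use False in simp)
    then show ?thesis by (rule poly_fun_cong) (simp add: mult.commute)
  qed
  then show ?thesis by (intro poly_fun_diff poly_fun_peval[OF deg] poly_fun_const)
qed

text \<open>The tangent gap \<open>\<phi> 1 - \<phi> 0 - \<phi>' 0\<close> of the restriction \<open>\<phi>\<close> of \<open>c\<close> to the segment from \<open>y\<close>
  to \<open>x\<close> is the integral of \<open>(1 - s) \<phi>'' s\<close>; SOS-convexity writes \<open>\<phi>''\<close> as a sum of squares
  whose coefficients depend polynomially on \<open>x\<close>, and the integral turns them into squares
  through the factorisation of the positive semidefinite Hankel matrix of Taylor weights.\<close>

lemma sos_convex_tangent_gap_sos:
  fixes c :: "('n::finite \<Rightarrow> nat) \<Rightarrow> real" and y :: "real^'n"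
  assumes c: "is_mpoly c" and deg: "mpoly_deg_le (2*r) c" and sc: "sos_convex c"
  shows "sos_fun r (\<lambda>x. peval c x - peval c y - (\<Sum>k\<in>UNIV. (x$k - y$k) * peval (pdiff k c) y))"
    (is "sos_fun r ?\<sigma>")
proof -
  obtain K and F :: "nat \<Rightarrow> 'n \<Rightarrow> ('n \<Rightarrow> nat) \<Rightarrow> real" and E
    where F: "\<forall>t<K. \<forall>k. is_mpoly (F t k) \<and> mpoly_deg_le E (F t k)"
      and hess: "\<forall>k l x. peval (pdiff k (pdiff l c)) x = (\<Sum>t<K. peval (F t k) x * peval (F t l) x)"
    by (rule sos_convex_obtain_factors[OF sc])
  define N where "N = E + r"
  obtain B where B: "\<And>z. (\<Sum>a\<le>N. \<Sum>b\<le>N. z a * z b * taylor_weight (a+b)) = (\<Sum>k<Suc N. (\<Sum>a<Suc N. B k a * z a)^2)"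
    using taylor_weight_hankel_factor by blast
  define G where "G = (\<lambda>t x. \<Sum>k\<in>UNIV. smult ((x - y)$k) (line_poly {\<alpha>. F t k \<alpha> \<noteq> 0} (F t k) y (x - y)))"
  have supp_F: "finite {\<alpha>. F t k \<alpha> \<noteq> 0}" "{\<alpha>. F t k \<alpha> \<noteq> 0} \<subseteq> exps E" if "t < K" for t k
    using F that by (auto simp: is_mpoly_def mpoly_deg_le_def)
  have deg_G: "degree (G t x) \<le> N" if "t < K" for t x
    unfolding G_def N_def
    by (intro degree_sum_le order_trans[OF degree_smult_le] order_trans[OF degree_line_poly[OF supp_F[OF that]]]) auto
  have gap: "?\<sigma> x = (\<Sum>t<K. \<Sum>k<Suc N. (\<Sum>a<Suc N. B k a * coeff (G t x) a)^2)" for x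
  proof -
    let ?\<phi> = "line_poly {\<alpha>. c \<alpha> \<noteq> 0} c y (x - y)"
    have "degree ?\<phi> \<le> 2 * N"
      using c mpoly_deg_le_support[OF deg] exps_mono[of "2 * r" "2 * N"]
      by (intro degree_line_poly) (auto simp: is_mpoly_def N_def)
    moreover have "pderiv (pderiv ?\<phi>) = (\<Sum>t<K. (G t x)^2)"
      unfolding G_def using line_poly_second_pderiv_sos[OF c _ hess] F by blast
    ultimately have "poly ?\<phi> 1 - poly ?\<phi> 0 - poly (pderiv ?\<phi>) 0 = (\<Sum>t<K. \<Sum>k<Suc N. (\<Sum>a<Suc N. B k a * coeff (G t x) a)^2)"
      by (rule taylor_remainder_sum_squares[OF _ _ deg_G B])
    then show ?thesis by (simp add: peval_line_poly[OF c] poly_pderiv_line_poly[OF c])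
  qed
  have "sos_fun (1 + E) (\<lambda>x. \<Sum>t<K. \<Sum>k<Suc N. (\<Sum>a<Suc N. B k a * coeff (G t x) a)^2)"
  proof (intro sos_fun_sum sos_fun_sq)
    fix t k assume "t \<in> {..<K}"
    then have "poly_fun_coeffs (1 + E) (G t)"
      unfolding G_def by (intro poly_fun_coeffs_sum poly_fun_coeffs_smult poly_fun_coord_diff poly_fun_coeffs_line_poly supp_F) simp_all
    then show "poly_fun (1 + E) (\<lambda>x. \<Sum>a<Suc N. B k a * coeff (G t x) a)"
      by (intro poly_fun_sum poly_fun_cmult) (auto simp: poly_fun_coeffs_def)
  qed simp_all
  then have "sos_fun (1 + E) ?\<sigma>" by (rule sos_fun_cong) (simp add: gap)
  then show ?thesis by (rule sos_fun_degree_bound[OF _ poly_fun_tangent_gap[OF deg]])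
qed

section \<open>Lagrange multipliers under a Slater condition\<close>

lemma convex_onD_weights:
  assumes "convex_on C f" "x \<in> C" "y \<in> C" "0 \<le> u" "0 \<le> w" "u + w = 1"
  shows "f (u *\<^sub>R x + w *\<^sub>R y) \<le> u * f x + w * f y"
  using assms unfolding convex_on_def by blast

lemma convex_comb_strict_less:
  fixes a1 a2 b1 b2 u w :: real
  assumes "a1 < b1" "a2 < b2" "0 \<le> u" "0 \<le> w" "u + w = 1"
  shows "u * a1 + w * a2 < u * b1 + w * b2"
proof (cases "u = 0")
  case True then show ?thesis using assms by simp
next
  case False
  then have "u * a1 < u * b1" using assms by simp
  moreover have "w * a2 \<le> w * b2" using assms by (simp add: mult_left_mono)
  ultimately show ?thesis by simp
qed

lemma convex_strict_epigraph_pair: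
  fixes F G :: "'a::real_vector \<Rightarrow> real"
  assumes C: "convex C" and F: "convex_on C F" and G: "convex_on C G"
  shows "convex {p::real \<times> real. \<exists>x\<in>C. F x < fst p \<and> G x < snd p}"
proof (rule convexI)
  fix p q :: "real \<times> real" and u w :: real
  assume "p \<in> {p. \<exists>x\<in>C. F x < fst p \<and> G x < snd p}" "q \<in> {p. \<exists>x\<in>C. F x < fst p \<and> G x < snd p}"
    and uw: "0 \<le> u" "0 \<le> w" "u + w = 1"
  then obtain x1 x2 where x1: "x1 \<in> C" "F x1 < fst p" "G x1 < snd p"
    and x2: "x2 \<in> C" "F x2 < fst q" "G x2 < snd q" by auto
  define x where "x = u *\<^sub>R x1 + w *\<^sub>R x2"
  have "x \<in> C" unfolding x_def using convexD[OF C x1(1) x2(1) uw] .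
  moreover have "F x < fst (u *\<^sub>R p + w *\<^sub>R q)"
    using convex_onD_weights[OF F x1(1) x2(1) uw] convex_comb_strict_less[OF x1(2) x2(2) uw] by (simp add: x_def)
  moreover have "G x < snd (u *\<^sub>R p + w *\<^sub>R q)"
    using convex_onD_weights[OF G x1(1) x2(1) uw] convex_comb_strict_less[OF x1(3) x2(3) uw] by (simp add: x_def)
  ultimately show "u *\<^sub>R p + w *\<^sub>R q \<in> {p. \<exists>x\<in>C. F x < fst p \<and> G x < snd p}" by blast
qed

lemma nonneg_on_halfline_imp_slope_nonneg:
  fixes a b :: real
  assumes "\<And>s. 0 \<le> s \<Longrightarrow> 0 \<le> a + b * s"
  shows "0 \<le> b"
proof (rule ccontr)
  assume "\<not> 0 \<le> b"
  then have "b * ((\<bar>a\<bar> + 1) / - b) = - (\<bar>a\<bar> + 1)" by simp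
  then have "a + b * ((\<bar>a\<bar> + 1) / - b) < 0" by linarith
  moreover have "0 \<le> (\<bar>a\<bar> + 1) / - b" using \<open>\<not> 0 \<le> b\<close> by (intro divide_nonneg_pos) auto
  ultimately show False using assms by fastforce
qed

lemma separation_multiplier:
  fixes F G :: "'a \<Rightarrow> real"
  assumes "0 < \<alpha>" "0 \<le> \<beta>"
    and sep: "\<And>x p1 p2. x \<in> C \<Longrightarrow> F x - v < p1 \<Longrightarrow> G x < p2 \<Longrightarrow> 0 \<le> \<alpha> * p1 + \<beta> * p2"
  shows "\<forall>x\<in>C. v \<le> F x + \<beta> / \<alpha> * G x"
proof
  fix x assume x: "x \<in> C"
  define \<mu> where "\<mu> = \<beta> / \<alpha>"
  have "0 \<le> \<mu>" "\<beta> = \<alpha> * \<mu>" using assms(1,2) by (simp_all add: \<mu>_def)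
  have "v \<le> F x + \<mu> * G x"
  proof (rule field_le_epsilon)
    fix e :: real assume "0 < e"
    define e' where "e' = e / (2 * (1 + \<mu>))"
    have "0 < e'" using \<open>0 < e\<close> \<open>0 \<le> \<mu>\<close> by (simp add: e'_def)
    then have "0 \<le> \<alpha> * (F x - v + e / 2) + \<beta> * (G x + e')"
      using \<open>0 < e\<close> by (intro sep[OF x]) auto
    also have "\<dots> = \<alpha> * ((F x - v + e / 2) + \<mu> * (G x + e'))"
      by (simp add: \<open>\<beta> = \<alpha> * \<mu>\<close> algebra_simps)
    finally have "0 \<le> (F x - v + e / 2) + \<mu> * (G x + e')"
      using assms(1) by (simp add: zero_le_mult_iff)
    moreover have "\<mu> * e' \<le> e / 2"
      using \<open>0 < e\<close> \<open>0 \<le> \<mu>\<close> by (simp add: e'_def divide_simps)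
    ultimately show "v \<le> F x + \<mu> * G x + e" by (simp add: algebra_simps)
  qed
  then show "v \<le> F x + \<beta> / \<alpha> * G x" by (simp add: \<mu>_def)
qed

text \<open>The convex set of values strictly dominating \<open>(F - v, G)\<close> on \<open>C\<close> misses the origin; a separating
  normal is nonnegative because that set is closed under increasing either coordinate.\<close>

lemma convex_pair_separation:
  fixes F G :: "'a::real_vector \<Rightarrow> real"
  assumes C: "convex C" and cF: "convex_on C F" and cG: "convex_on C G"
    and x0: "x0 \<in> C" and hyp: "\<And>x. x \<in> C \<Longrightarrow> G x \<le> 0 \<Longrightarrow> v \<le> F x"
  obtains \<alpha> \<beta> where "0 \<le> \<alpha>" "0 \<le> \<beta>" "(\<alpha>, \<beta>) \<noteq> 0"
    and "\<And>x p1 p2. x \<in> C \<Longrightarrow> F x - v < p1 \<Longrightarrow> G x < p2 \<Longrightarrow> 0 \<le> \<alpha> * p1 + \<beta> * p2"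
proof -
  define S where "S = {p::real \<times> real. \<exists>x\<in>C. F x - v < fst p \<and> G x < snd p}"
  have "convex S"
    unfolding S_def using convex_strict_epigraph_pair[OF C convex_on_add[OF cF convex_on_const[THEN iffD2, OF C]] cG, of "- v"] C
    by simp
  moreover have "0 \<notin> S"
  proof
    assume "0 \<in> S"
    then obtain x where "x \<in> C" "F x < v" "G x < 0" by (auto simp: S_def)
    with hyp show False by fastforce
  qed
  ultimately obtain a where a: "a \<noteq> 0" "\<And>p. p \<in> S \<Longrightarrow> 0 \<le> inner a p"
    by (metis separating_hyperplane_set_0)
  obtain \<alpha> \<beta> where ab: "a = (\<alpha>, \<beta>)" by (cases a)
  have sep: "0 \<le> \<alpha> * p1 + \<beta> * p2" if "x \<in> C" "F x - v < p1" "G x < p2" for x p1 p2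
    using a(2)[of "(p1, p2)"] that by (auto simp: S_def ab)
  define a0 where "a0 = \<bar>F x0 - v\<bar> + 1"
  define b0 where "b0 = \<bar>G x0\<bar> + 1"
  have "0 \<le> \<alpha>"
  proof (rule nonneg_on_halfline_imp_slope_nonneg)
    fix s :: real assume "0 \<le> s"
    then have "0 \<le> \<alpha> * (a0 + s) + \<beta> * b0" by (intro sep[OF x0]) (auto simp: a0_def b0_def)
    then show "0 \<le> (\<alpha> * a0 + \<beta> * b0) + \<alpha> * s" by (simp add: algebra_simps)
  qed
  moreover have "0 \<le> \<beta>"
  proof (rule nonneg_on_halfline_imp_slope_nonneg)
    fix s :: real assume "0 \<le> s"
    then have "0 \<le> \<alpha> * a0 + \<beta> * (b0 + s)" by (intro sep[OF x0]) (auto simp: a0_def b0_def)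
    then show "0 \<le> (\<alpha> * a0 + \<beta> * b0) + \<beta> * s" by (simp add: algebra_simps)
  qed
  ultimately show thesis using that a(1) sep ab by blast
qed

lemma convex_multiplier_single:
  fixes F G :: "'a::real_vector \<Rightarrow> real"
  assumes C: "convex C" and cF: "convex_on C F" and cG: "convex_on C G"
    and x0: "x0 \<in> C" "G x0 < 0" and hyp: "\<And>x. x \<in> C \<Longrightarrow> G x \<le> 0 \<Longrightarrow> v \<le> F x"
  shows "\<exists>\<mu>\<ge>0. \<forall>x\<in>C. v \<le> F x + \<mu> * G x"
proof -
  obtain \<alpha> \<beta> where ab: "0 \<le> \<alpha>" "0 \<le> \<beta>" "(\<alpha>, \<beta>) \<noteq> 0"
    and sep: "\<And>x p1 p2. x \<in> C \<Longrightarrow> F x - v < p1 \<Longrightarrow> G x < p2 \<Longrightarrow> 0 \<le> \<alpha> * p1 + \<beta> * p2"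
    using convex_pair_separation[OF C cF cG x0(1) hyp] by blast
  have "0 < \<alpha>"
  proof (rule ccontr)
    assume "\<not> 0 < \<alpha>"
    with ab have "\<alpha> = 0" "0 < \<beta>" by (auto simp: zero_prod_def)
    have "0 \<le> \<alpha> * (\<bar>F x0 - v\<bar> + 1) + \<beta> * (G x0 / 2)" by (rule sep[OF x0(1)]) (use x0(2) in auto)
    moreover have "\<beta> * (G x0 / 2) < 0" using \<open>0 < \<beta>\<close> x0(2) by (simp add: mult_pos_neg)
    ultimately show False using \<open>\<alpha> = 0\<close> by simp
  qed
  have "\<forall>x\<in>C. v \<le> F x + \<beta> / \<alpha> * G x"
    by (rule separation_multiplier[OF \<open>0 < \<alpha>\<close> \<open>0 \<le> \<beta>\<close> sep])
  with \<open>0 < \<alpha>\<close> \<open>0 \<le> \<beta>\<close> show ?thesis by (intro exI[of _ "\<beta> / \<alpha>"]) simp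
qed

lemma convex_on_nonneg_weighted_sum:
  fixes g :: "nat \<Rightarrow> 'a::real_vector \<Rightarrow> real"
  shows "finite I \<Longrightarrow> convex C \<Longrightarrow> (\<And>i. i \<in> I \<Longrightarrow> 0 \<le> lam i \<and> convex_on C (g i)) \<Longrightarrow>
    convex_on C (\<lambda>x. \<Sum>i\<in>I. lam i * g i x)"
proof (induction I rule: finite_induct)
  case empty then show ?case by (simp add: convex_on_const)
next
  case (insert i I)
  have "convex_on C (\<lambda>x. lam i * g i x + (\<Sum>i\<in>I. lam i * g i x))"
    using insert by (intro convex_on_add convex_on_cmul) auto
  then show ?case using insert by simp
qed

lemma convex_sublevel_set: "convex C \<Longrightarrow> convex_on C g \<Longrightarrow> convex {x\<in>C. g x \<le> 0}"
proof (rule convexI)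
  fix x y u w assume C: "convex C" and g: "convex_on C g" and x: "x \<in> {x\<in>C. g x \<le> 0}" and y: "y \<in> {x\<in>C. g x \<le> 0}"
    and u: "0 \<le> (u::real)" and w: "0 \<le> w" and uw: "u + w = 1"
  have "g (u *\<^sub>R x + w *\<^sub>R y) \<le> u * g x + w * g y" using x y by (intro convex_onD_weights[OF g _ _ u w uw]) auto
  also have "\<dots> \<le> 0" using x y u w by (simp add: add_nonpos_nonpos mult_nonneg_nonpos)
  finally show "u *\<^sub>R x + w *\<^sub>R y \<in> {x\<in>C. g x \<le> 0}" using convexD[OF C _ _ u w uw] x y by auto
qed

text \<open>Induction on the number of constraints: the last one is first absorbed into the domain, by
  restricting to its sublevel set, and then dualised by the single-constraint case.\<close>

lemma convex_lagrange_multipliers: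
  fixes f :: "'a::real_vector \<Rightarrow> real" and g :: "nat \<Rightarrow> 'a \<Rightarrow> real"
  shows "convex C \<Longrightarrow> convex_on C f \<Longrightarrow> (\<forall>i\<in>{1..m}. convex_on C (g i)) \<Longrightarrow> x0 \<in> C \<Longrightarrow>
    (\<forall>i\<in>{1..m}. g i x0 < 0) \<Longrightarrow> (\<forall>x\<in>C. (\<forall>i\<in>{1..m}. g i x \<le> 0) \<longrightarrow> v \<le> f x) \<Longrightarrow>
    \<exists>lam. (\<forall>i\<in>{1..m}. 0 \<le> lam i) \<and> (\<forall>x\<in>C. v \<le> f x + (\<Sum>i=1..m. lam i * g i x))"
proof (induction m arbitrary: C)
  case 0 then show ?case by auto
next
  case (Suc m)
  define C' where "C' = {x\<in>C. g (Suc m) x \<le> 0}"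
  have gS: "g (Suc m) x0 < 0" using Suc.prems(5)[rule_format, of "Suc m"] by simp
  have cC': "convex C'" unfolding C'_def using Suc.prems(1,3) by (intro convex_sublevel_set) auto
  have sub: "C' \<subseteq> C" by (auto simp: C'_def)
  have "convex_on C' f" "\<forall>i\<in>{1..m}. convex_on C' (g i)"
    using Suc.prems(2,3) convex_on_subset[OF _ sub cC'] by auto
  moreover have "x0 \<in> C'" "\<forall>i\<in>{1..m}. g i x0 < 0" using Suc.prems(4,5) less_imp_le[OF gS] by (auto simp: C'_def)
  moreover have "\<forall>x\<in>C'. (\<forall>i\<in>{1..m}. g i x \<le> 0) \<longrightarrow> v \<le> f x"
  proof (intro ballI impI)
    fix x assume "x \<in> C'" "\<forall>i\<in>{1..m}. g i x \<le> 0"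
    then have "\<forall>i\<in>{1..Suc m}. g i x \<le> 0" by (auto simp: C'_def le_Suc_eq)
    then show "v \<le> f x" using Suc.prems(6) \<open>x \<in> C'\<close> sub by auto
  qed
  ultimately obtain lam where lam: "\<forall>i\<in>{1..m}. 0 \<le> lam i" "\<forall>x\<in>C'. v \<le> f x + (\<Sum>i=1..m. lam i * g i x)"
    using Suc.IH[OF cC'] by blast
  have conv: "convex_on C (\<lambda>x. f x + (\<Sum>i=1..m. lam i * g i x))"
    using Suc.prems(1,2,3) lam(1) by (intro convex_on_add convex_on_nonneg_weighted_sum) auto
  have hyp: "v \<le> f x + (\<Sum>i=1..m. lam i * g i x)" if "x \<in> C" "g (Suc m) x \<le> 0" for x
    using lam(2) that by (auto simp: C'_def)
  have conv_g: "convex_on C (g (Suc m))" using Suc.prems(3) by simp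
  obtain \<mu> where mu: "0 \<le> \<mu>" "\<forall>x\<in>C. v \<le> (f x + (\<Sum>i=1..m. lam i * g i x)) + \<mu> * g (Suc m) x"
    using convex_multiplier_single[OF Suc.prems(1) conv conv_g Suc.prems(4) gS hyp] by blast
  define lam' where "lam' = lam(Suc m := \<mu>)"
  have "(\<Sum>i=1..Suc m. lam' i * g i x) = (\<Sum>i=1..m. lam i * g i x) + \<mu> * g (Suc m) x" for x
  proof -
    have "(\<Sum>i=1..m. lam' i * g i x) = (\<Sum>i=1..m. lam i * g i x)" by (intro sum.cong) (auto simp: lam'_def)
    then show ?thesis by (simp add: lam'_def)
  qed
  moreover have "\<forall>i\<in>{1..Suc m}. 0 \<le> lam' i" using lam(1) mu(1) by (auto simp: lam'_def le_Suc_eq)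
  ultimately show ?case using mu(2) by (intro exI[of _ lam']) auto
qed

section \<open>Convex polynomial functions bounded below attain their infimum\<close>

lemma poly_fun_isCont: "poly_fun D f \<Longrightarrow> isCont f x"
  using poly_fun_continuous continuous_on_eq_continuous_at[of UNIV f] by blast

lemma convex_const_line_propagates:
  fixes h :: "'a::real_normed_vector \<Rightarrow> real"
  assumes hconv: "convex_on UNIV h" and hcont: "\<And>x. isCont h x"
    and c0: "\<And>t. h (x0 + t *\<^sub>R v) = h x0" and t: "0 \<le> t"
  shows "h (x + t *\<^sub>R v) \<le> h x"
proof -
  define u where "u = (\<lambda>n::nat. inverse (real (Suc n)))"
  have u0: "u \<longlonglongrightarrow> 0" unfolding u_def by (rule LIMSEQ_inverse_real_of_nat)
  have u: "0 < u n" "u n \<le> 1" for n by (simp_all add: u_def field_simps)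
  define z where "z = (\<lambda>n. x + t *\<^sub>R v + u n *\<^sub>R (x0 - x))"
  have "z \<longlonglongrightarrow> x + t *\<^sub>R v"
    unfolding z_def using tendsto_add[OF tendsto_const tendsto_scaleR[OF u0 tendsto_const], of "x + t *\<^sub>R v" "x0 - x"]
    by simp
  then have lim1: "(\<lambda>n. h (z n)) \<longlonglongrightarrow> h (x + t *\<^sub>R v)" by (rule isCont_tendsto_compose[OF hcont])
  have lim2: "(\<lambda>n. (1 - u n) * h x + u n * h x0) \<longlonglongrightarrow> (1 - 0) * h x + 0 * h x0"
    by (intro tendsto_intros u0)
  have "h (z n) \<le> (1 - u n) * h x + u n * h x0" for n
  proof -
    have "z n = (1 - u n) *\<^sub>R x + u n *\<^sub>R (x0 + (t / u n) *\<^sub>R v)"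
      using u(1)[of n] by (simp add: z_def algebra_simps)
    moreover have "h ((1 - u n) *\<^sub>R x + u n *\<^sub>R (x0 + (t / u n) *\<^sub>R v)) \<le> (1 - u n) * h x + u n * h (x0 + (t / u n) *\<^sub>R v)"
      by (rule convex_onD_weights[OF hconv]) (use u[of n] in auto)
    ultimately show ?thesis by (simp add: c0)
  qed
  then show ?thesis using LIMSEQ_le[OF lim1 lim2] by simp
qed

definition const_dirs :: "('a::real_vector \<Rightarrow> real) \<Rightarrow> 'a set" where
  "const_dirs h = {v. \<forall>x t. h (x + t *\<^sub>R v) = h x}"

lemma subspace_const_dirs: "subspace (const_dirs h)"
proof (rule subspaceI)
  show "0 \<in> const_dirs h" by (simp add: const_dirs_def)
  fix v w assume v: "v \<in> const_dirs h" and w: "w \<in> const_dirs h"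
  have "h (x + t *\<^sub>R (v + w)) = h x" for x t
  proof -
    have "h (x + t *\<^sub>R (v + w)) = h ((x + t *\<^sub>R v) + t *\<^sub>R w)" by (simp add: algebra_simps)
    also have "\<dots> = h x" using v w by (simp add: const_dirs_def)
    finally show ?thesis .
  qed
  then show "v + w \<in> const_dirs h" by (simp add: const_dirs_def)
next
  fix c v assume "v \<in> const_dirs h"
  then show "c *\<^sub>R v \<in> const_dirs h" by (simp add: const_dirs_def)
qed

lemma const_dirs_orthogonal_rep:
  fixes h :: "'a::euclidean_space \<Rightarrow> real"
  obtains z where "\<forall>w\<in>const_dirs h. inner w z = 0" "h x = h z"
proof -
  obtain a z where az: "a \<in> span (const_dirs h)" "\<And>w. w \<in> span (const_dirs h) \<Longrightarrow> orthogonal z w" "x = a + z"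
    using orthogonal_subspace_decomp_exists by blast
  have span: "span (const_dirs h) = const_dirs h" using subspace_const_dirs by simp
  then have orth: "\<forall>w\<in>const_dirs h. inner w z = 0" using az(2) by (auto simp: orthogonal_def inner_commute span_base)
  have "a \<in> const_dirs h" using az(1) span by simp
  then have "h (z + 1 *\<^sub>R a) = h z" unfolding const_dirs_def by blast
  with orth show thesis using that az(3) by (simp add: add.commute)
qed

lemma closed_orthogonal_complement: "closed {z. \<forall>w\<in>S. inner w z = 0}"
proof -
  have "{z. \<forall>w\<in>S. inner w z = 0} = (\<Inter>w\<in>S. {z. inner w z = 0})" by auto
  then show ?thesis by (simp add: closed_INT closed_hyperplane)
qed

context
  fixes h :: "real^'n::finite \<Rightarrow> real" and D :: nat and L :: real
  assumes hpoly: "poly_fun D h" and hconv: "convex_on UNIV h" and hlb: "\<And>x. L \<le> h x"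
begin

lemma halfline_nonincreasing_imp_const:
  assumes "\<And>t. 0 \<le> t \<Longrightarrow> h (x + t *\<^sub>R v) \<le> h x"
  shows "h (x + t *\<^sub>R v) = h x"
proof -
  obtain p where p: "\<And>s. poly p s = h (x + s *\<^sub>R v)" using poly_fun_line_poly[OF hpoly, of x v] by blast
  have "\<bar>poly p s\<bar> \<le> \<bar>L\<bar> + \<bar>h x\<bar>" if "0 \<le> s" for s
    using assms[OF that] hlb[of "x + s *\<^sub>R v"] p[of s] by linarith
  then have "poly p t = poly p 0" by (rule poly_bounded_halfline_const)
  then show ?thesis using p[of t] p[of 0] by simp
qed

lemma recession_direction_const:
  assumes "\<And>t. 0 \<le> t \<Longrightarrow> h (x0 + t *\<^sub>R v) \<le> h x0"
  shows "v \<in> const_dirs h"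
proof -
  have "h (x0 + s *\<^sub>R v) = h x0" for s using halfline_nonincreasing_imp_const[OF assms] .
  then have "h (x + s *\<^sub>R v) \<le> h x" if "0 \<le> s" for x s
    using convex_const_line_propagates[OF hconv poly_fun_isCont[OF hpoly]] that by blast
  then show ?thesis unfolding const_dirs_def using halfline_nonincreasing_imp_const by blast
qed

text \<open>A divergent sequence in the sublevel set, orthogonal to the constancy directions, would give in
  the limit a unit recession direction, which is then a constancy direction orthogonal to itself.\<close>

lemma bounded_orthogonal_sublevel:
  "bounded ({z. \<forall>w\<in>const_dirs h. inner w z = 0} \<inter> {z. h z \<le> h 0})" (is "bounded (?P \<inter> _)")
proof (rule ccontr)
  define K where "K = ?P \<inter> {z. h z \<le> h 0}"
  assume "\<not> bounded (?P \<inter> {z. h z \<le> h 0})"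
  then have "\<forall>n::nat. \<exists>z\<in>K. real n < norm z" unfolding bounded_iff K_def by (meson not_le)
  then obtain zs where "\<And>n. zs n \<in> K" and zs3: "\<And>n. real n < norm (zs n)" by metis
  then have zs: "\<And>n. zs n \<in> ?P" "\<And>n. h (zs n) \<le> h 0" "\<And>n. real n < norm (zs n)" by (auto simp: K_def)
  have zpos: "0 < norm (zs n)" for n using zs(3)[of n] by linarith
  define d where "d = (\<lambda>n. (1 / norm (zs n)) *\<^sub>R zs n)"
  have "d n \<in> sphere 0 1" for n using zpos[of n] by (simp add: d_def)
  then obtain l r where l: "l \<in> sphere 0 1" "strict_mono r" "(d \<circ> r) \<longlonglongrightarrow> l"
    using seq_compactE[OF compact_imp_seq_compact[OF compact_sphere[of 0 1]], of d] by blast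
  have closedP: "closed ?P" by (rule closed_orthogonal_complement)
  have "d n \<in> ?P" for n using zs(1)[of n] by (simp add: d_def inner_scaleR_right)
  then have lP: "l \<in> ?P" by (intro closed_sequentially[OF closedP _ l(3)]) simp
  have "h (0 + t *\<^sub>R l) \<le> h 0" if t: "0 \<le> t" for t
  proof -
    have lim: "(\<lambda>n. h (t *\<^sub>R (d \<circ> r) n)) \<longlonglongrightarrow> h (t *\<^sub>R l)"
      by (rule isCont_tendsto_compose[OF poly_fun_isCont[OF hpoly]]) (intro tendsto_intros l(3))
    have "h (t *\<^sub>R (d \<circ> r) n) \<le> h 0" if n: "n \<ge> nat \<lceil>t\<rceil>" for n
    proof -
      define lm where "lm = t / norm (zs (r n))"
      have "real n \<le> real (r n)" using seq_suble[OF l(2), of n] by simp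
      then have "t < norm (zs (r n))" using zs(3)[of "r n"] n by linarith
      then have lm: "0 \<le> lm" "lm \<le> 1" using t zpos[of "r n"] by (auto simp: lm_def field_simps)
      have "t *\<^sub>R (d \<circ> r) n = (1 - lm) *\<^sub>R 0 + lm *\<^sub>R zs (r n)" by (simp add: d_def lm_def)
      then have "h (t *\<^sub>R (d \<circ> r) n) \<le> (1 - lm) * h 0 + lm * h (zs (r n))"
        using convex_onD_weights[OF hconv, of 0 "zs (r n)" "1 - lm" lm] lm by simp
      also have "\<dots> \<le> (1 - lm) * h 0 + lm * h 0" using zs(2)[of "r n"] lm by (simp add: mult_left_mono)
      finally show ?thesis by (simp add: algebra_simps)
    qed
    then have "h (t *\<^sub>R l) \<le> h 0" by (intro LIMSEQ_le[OF lim tendsto_const]) blast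
    then show ?thesis by simp
  qed
  then have "l \<in> const_dirs h" by (rule recession_direction_const)
  then have "inner l l = 0" using lP by simp
  then show False using l(1) by simp
qed

lemma convex_poly_fun_attains_min: "\<exists>y. \<forall>x. h y \<le> h x"
proof -
  define K where "K = {z. \<forall>w\<in>const_dirs h. inner w z = 0} \<inter> {z. h z \<le> h 0}"
  have cont: "continuous_on K h" using poly_fun_continuous[OF hpoly] continuous_on_subset by blast
  have "closed K" unfolding K_def
    by (intro closed_Int closed_orthogonal_complement closed_Collect_le continuous_on_const poly_fun_continuous[OF hpoly])
  then have "compact K" using bounded_orthogonal_sublevel by (simp add: K_def compact_eq_bounded_closed)
  moreover have "0 \<in> K" by (simp add: K_def)
  ultimately obtain y where y: "y \<in> K" "\<And>z. z \<in> K \<Longrightarrow> h y \<le> h z"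
    using continuous_attains_inf[OF _ _ cont] by blast
  have "h y \<le> h x" for x
  proof -
    obtain z where "\<forall>w\<in>const_dirs h. inner w z = 0" "h x = h z" by (rule const_dirs_orthogonal_rep)
    then show ?thesis using y(2)[of z] y(2)[OF \<open>0 \<in> K\<close>] by (cases "h z \<le> h 0") (auto simp: K_def)
  qed
  then show ?thesis by blast
qed

end

section \<open>The moment relaxation\<close>

lemma sum_indicator_eq: "finite S \<Longrightarrow> (\<Sum>\<alpha>\<in>S. f \<alpha> * (if \<alpha> = a then 1 else 0)) = (if a \<in> S then f a else (0::real))"
  by (simp add: if_distrib sum.delta' cong: if_cong)

lemma unit_exp_in_exps: "e \<le> D \<Longrightarrow> (\<lambda>l. if l = j then e else 0) \<in> exps D"
  by (simp add: exps_def sum.delta)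

lemma mon_unit_exp: "mon (\<lambda>l. if l = j then e else 0) x = (x$j) ^ e"
proof -
  have "(x$l) ^ (if l = j then e else 0) = (if l = j then (x$l)^e else 1)" for l by simp
  then show ?thesis by (simp add: mon_def prod.delta)
qed

lemma poly_eq_sum_upto: "degree (p::real poly) \<le> D \<Longrightarrow> poly p t = (\<Sum>a\<in>{0..D}. coeff p a * t ^ a)"
proof -
  assume "degree p \<le> D"
  have "poly p t = (\<Sum>a\<le>degree p. coeff p a * t ^ a)" by (rule poly_altdef)
  also have "\<dots> = (\<Sum>a\<le>D. coeff p a * t ^ a)"
    by (rule sum.mono_neutral_left) (use \<open>degree p \<le> D\<close> in \<open>auto simp: coeff_eq_0\<close>)
  finally show ?thesis by (simp add: atLeast0AtMost)
qed

lemma d_le_d0: "d j \<le> d0 d"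
  unfolding d0_def by (rule Max_ge) auto

lemma psd_on_rank_one:
  assumes "\<And>a b. a \<in> I \<Longrightarrow> b \<in> I \<Longrightarrow> M a b = u a * u b"
  shows "psd_on I M"
  unfolding psd_on_def
proof
  fix v :: "'a \<Rightarrow> real"
  have "(\<Sum>a\<in>I. \<Sum>b\<in>I. v a * M a b * v b) = (\<Sum>a\<in>I. \<Sum>b\<in>I. (v a * u a) * (v b * u b))"
    using assms by (intro sum.cong refl) (simp add: mult_ac)
  also have "\<dots> = (\<Sum>a\<in>I. v a * u a)^2" by (simp add: power2_eq_square sum_product)
  finally show "0 \<le> (\<Sum>a\<in>I. \<Sum>b\<in>I. v a * M a b * v b)" by simp
qed

lemma mon_sum_eq_imp_moment_eq:
  assumes "finite E" "\<And>x. (\<Sum>\<alpha>\<in>E. a \<alpha> * mon \<alpha> x) = (\<Sum>\<alpha>\<in>E. b \<alpha> * mon \<alpha> x)"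
  shows "(\<Sum>\<alpha>\<in>E. a \<alpha> * y \<alpha>) = (\<Sum>\<alpha>\<in>E. b \<alpha> * y \<alpha>)"
  using mon_sum_eq_imp_coeff_eq[OF assms] by (intro sum.cong) auto

text \<open>With \<open>\<psi> a b\<close> the exponent of the product of the \<open>a\<close>-th and \<open>b\<close>-th monomial,
  \<^term>\<open>square_coeffs I \<psi> c\<close> is the coefficient vector of the square of \<open>\<Sum>a\<in>I. c a * x ^ a\<close>.\<close>

definition square_coeffs :: "'i set \<Rightarrow> ('i \<Rightarrow> 'i \<Rightarrow> 'n \<Rightarrow> nat) \<Rightarrow> ('i \<Rightarrow> real) \<Rightarrow> ('n \<Rightarrow> nat) \<Rightarrow> real" where
  "square_coeffs I \<psi> c \<alpha> = (\<Sum>a\<in>I. \<Sum>b\<in>I. c a * c b * (if \<alpha> = \<psi> a b then 1 else 0))"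

lemma sum_square_coeffs:
  assumes E: "finite E" and \<psi>: "\<And>a b. a \<in> I \<Longrightarrow> b \<in> I \<Longrightarrow> \<psi> a b \<in> E"
  shows "(\<Sum>\<alpha>\<in>E. square_coeffs I \<psi> c \<alpha> * w \<alpha>) = (\<Sum>a\<in>I. \<Sum>b\<in>I. c a * c b * w (\<psi> a b))"
proof -
  have "(\<Sum>\<alpha>\<in>E. square_coeffs I \<psi> c \<alpha> * w \<alpha>)
      = (\<Sum>\<alpha>\<in>E. \<Sum>a\<in>I. \<Sum>b\<in>I. c a * c b * (w \<alpha> * (if \<alpha> = \<psi> a b then 1 else 0)))"
    by (simp add: square_coeffs_def sum_distrib_left sum_distrib_right mult_ac)
  also have "\<dots> = (\<Sum>a\<in>I. \<Sum>b\<in>I. \<Sum>\<alpha>\<in>E. c a * c b * (w \<alpha> * (if \<alpha> = \<psi> a b then 1 else 0)))"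
    by (simp only: sum.swap[of _ E])
  also have "\<dots> = (\<Sum>a\<in>I. \<Sum>b\<in>I. c a * c b * w (\<psi> a b))"
    using \<psi> by (intro sum.cong refl) (simp add: sum_distrib_left[symmetric] sum_indicator_eq[OF E])
  finally show ?thesis .
qed

lemma moment_square_coeffs_nonneg:
  assumes E: "finite E" and \<psi>: "\<And>a b. a \<in> I \<Longrightarrow> b \<in> I \<Longrightarrow> \<psi> a b \<in> E"
    and psd: "psd_on I (\<lambda>a b. \<Sum>\<alpha>\<in>E. y \<alpha> * (if \<alpha> = \<psi> a b then 1 else 0))"
  shows "0 \<le> (\<Sum>\<alpha>\<in>E. square_coeffs I \<psi> c \<alpha> * y \<alpha>)"
proof -
  have "(\<Sum>\<alpha>\<in>E. square_coeffs I \<psi> c \<alpha> * y \<alpha>) = (\<Sum>a\<in>I. \<Sum>b\<in>I. c a * c b * y (\<psi> a b))"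
    by (rule sum_square_coeffs[OF E \<psi>])
  also have "\<dots> = (\<Sum>a\<in>I. \<Sum>b\<in>I. c a * (\<Sum>\<alpha>\<in>E. y \<alpha> * (if \<alpha> = \<psi> a b then 1 else 0)) * c b)"
    using \<psi> by (intro sum.cong refl) (simp add: sum_indicator_eq[OF E])
  also have "0 \<le> \<dots>" using psd unfolding psd_on_def by blast
  finally show ?thesis by simp
qed

lemma sum_square_coeffs_peval:
  assumes E: "finite E" "exps (2 * r) \<subseteq> E" and deg: "mpoly_deg_le r c"
  shows "(\<Sum>\<alpha>\<in>E. square_coeffs (exps r) (\<lambda>\<beta> \<gamma> l. \<beta> l + \<gamma> l) c \<alpha> * mon \<alpha> x) = (peval c x)^2"
proof -
  have "(\<lambda>l. \<beta> l + \<gamma> l) \<in> E" if "\<beta> \<in> exps r" "\<gamma> \<in> exps r" for \<beta> \<gamma>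
    using exps_add[OF that] E(2) by (auto simp: mult_2)
  then have "(\<Sum>\<alpha>\<in>E. square_coeffs (exps r) (\<lambda>\<beta> \<gamma> l. \<beta> l + \<gamma> l) c \<alpha> * mon \<alpha> x)
      = (\<Sum>\<beta>\<in>exps r. \<Sum>\<gamma>\<in>exps r. c \<beta> * c \<gamma> * (mon \<beta> x * mon \<gamma> x))"
    by (simp add: sum_square_coeffs[OF E(1)] mon_add)
  also have "\<dots> = (\<Sum>\<beta>\<in>exps r. c \<beta> * mon \<beta> x)^2"
    by (simp add: power2_eq_square sum_product mult_ac)
  also have "\<dots> = (peval c x)^2"
    using peval_eq_sum_superset[OF finite_exps mpoly_deg_le_support[OF deg]] by simp
  finally show ?thesis .
qed

lemma sum_square_coeffs_poly:
  assumes E: "finite E" "\<And>e. e \<le> 2 * D \<Longrightarrow> (\<lambda>l. if l = j then e else 0) \<in> E" and deg: "degree p \<le> D"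
  shows "(\<Sum>\<alpha>\<in>E. square_coeffs {0..D} (\<lambda>a b l. if l = j then a + b else 0) (coeff p) \<alpha> * mon \<alpha> x)
    = (poly p (x$j))^2"
proof -
  have "(\<lambda>l. if l = j then a + b else 0) \<in> E" if "a \<in> {0..D}" "b \<in> {0..D}" for a b
    using E(2) that by simp
  then have "(\<Sum>\<alpha>\<in>E. square_coeffs {0..D} (\<lambda>a b l. if l = j then a + b else 0) (coeff p) \<alpha> * mon \<alpha> x)
      = (\<Sum>a\<in>{0..D}. \<Sum>b\<in>{0..D}. coeff p a * coeff p b * mon (\<lambda>l. if l = j then a + b else 0) x)"
    by (rule sum_square_coeffs[OF E(1)])
  also have "\<dots> = (\<Sum>a\<in>{0..D}. \<Sum>b\<in>{0..D}. coeff p a * coeff p b * ((x$j)^a * (x$j)^b))"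
    by (simp add: mon_unit_exp power_add)
  also have "\<dots> = (poly p (x$j))^2"
    by (simp add: poly_eq_sum_upto[OF deg] power2_eq_square sum_product mult_ac)
  finally show ?thesis .
qed

lemma moment_certificate_identity:
  fixes q :: "nat \<Rightarrow> ('n::finite \<Rightarrow> nat) \<Rightarrow> real" and pj :: "'n \<Rightarrow> nat \<Rightarrow> real poly"
  assumes E: "finite E" "exps (2 * r) \<subseteq> E" "\<And>j e. e \<le> 2 * d j \<Longrightarrow> (\<lambda>l. if l = j then e else 0) \<in> E"
    and f_supp: "{\<alpha>. fc \<alpha> \<noteq> 0} \<subseteq> E" and g_supp: "\<forall>i\<in>{1..m}. {\<alpha>. gc i \<alpha> \<noteq> 0} \<subseteq> E"
    and q: "\<forall>k<K. mpoly_deg_le r (q k)" and pj: "\<And>j. \<forall>k<Kj j. degree (pj j k) \<le> d j"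
    and ident: "\<And>x. peval fc x + (\<Sum>i=1..m. lam i * peval (gc i) x) - \<mu>
      = (\<Sum>k<K. (peval (q k) x)^2) + (\<Sum>j\<in>UNIV. \<Sum>k<Kj j. (poly (pj j k) (x$j))^2)"
  shows "(\<Sum>\<alpha>\<in>E. fc \<alpha> * y \<alpha>) + (\<Sum>i=1..m. lam i * (\<Sum>\<alpha>\<in>E. gc i \<alpha> * y \<alpha>))
    = \<mu> * y (\<lambda>_. 0) + (\<Sum>k<K. \<Sum>\<alpha>\<in>E. square_coeffs (exps r) (\<lambda>\<beta> \<gamma> l. \<beta> l + \<gamma> l) (q k) \<alpha> * y \<alpha>)
      + (\<Sum>j\<in>UNIV. \<Sum>k<Kj j. \<Sum>\<alpha>\<in>E. square_coeffs {0..d j} (\<lambda>a b l. if l = j then a + b else 0) (coeff (pj j k)) \<alpha> * y \<alpha>)"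
proof -
  define lhs where "lhs = (\<lambda>\<alpha>. fc \<alpha> + (\<Sum>i=1..m. lam i * gc i \<alpha>))"
  define rhs where "rhs = (\<lambda>\<alpha>. \<mu> * (if \<alpha> = (\<lambda>_. 0) then 1 else 0)
    + (\<Sum>k<K. square_coeffs (exps r) (\<lambda>\<beta> \<gamma> l. \<beta> l + \<gamma> l) (q k) \<alpha>)
    + (\<Sum>j\<in>UNIV. \<Sum>k<Kj j. square_coeffs {0..d j} (\<lambda>a b l. if l = j then a + b else 0) (coeff (pj j k)) \<alpha>))"
  have lhs_eval: "(\<Sum>\<alpha>\<in>E. lhs \<alpha> * w \<alpha>) = (\<Sum>\<alpha>\<in>E. fc \<alpha> * w \<alpha>) + (\<Sum>i=1..m. lam i * (\<Sum>\<alpha>\<in>E. gc i \<alpha> * w \<alpha>))" for w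
    by (simp add: lhs_def distrib_right sum.distrib sum_distrib_left sum_distrib_right mult.assoc sum.swap[of _ E])
  have "(\<lambda>_. 0) \<in> E" using E(2) by (auto simp: exps_def)
  then have "(\<Sum>\<alpha>\<in>E. (if \<alpha> = (\<lambda>_. 0) then 1 else 0) * w \<alpha>) = w (\<lambda>_. 0)" for w :: "('n \<Rightarrow> nat) \<Rightarrow> real"
    using sum_indicator_eq[OF E(1), of w "\<lambda>_. 0"] by (simp add: mult.commute)
  then have rhs_eval: "(\<Sum>\<alpha>\<in>E. rhs \<alpha> * w \<alpha>) = \<mu> * w (\<lambda>_. 0)
    + (\<Sum>k<K. \<Sum>\<alpha>\<in>E. square_coeffs (exps r) (\<lambda>\<beta> \<gamma> l. \<beta> l + \<gamma> l) (q k) \<alpha> * w \<alpha>)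
    + (\<Sum>j\<in>UNIV. \<Sum>k<Kj j. \<Sum>\<alpha>\<in>E. square_coeffs {0..d j} (\<lambda>a b l. if l = j then a + b else 0) (coeff (pj j k)) \<alpha> * w \<alpha>)" for w
    by (simp add: rhs_def distrib_right sum.distrib sum_distrib_left sum_distrib_right mult.assoc sum.swap[of _ E] flip: sum_distrib_left)
  have "(\<Sum>\<alpha>\<in>E. lhs \<alpha> * mon \<alpha> x) = (\<Sum>\<alpha>\<in>E. rhs \<alpha> * mon \<alpha> x)" for x
  proof -
    have "(\<Sum>\<alpha>\<in>E. fc \<alpha> * mon \<alpha> x) = peval fc x"
      using peval_eq_sum_superset[OF E(1) f_supp] by simp
    moreover have "(\<Sum>\<alpha>\<in>E. gc i \<alpha> * mon \<alpha> x) = peval (gc i) x" if "i \<in> {1..m}" for i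
      using peval_eq_sum_superset[OF E(1), of "gc i" x] g_supp that by simp
    ultimately have "(\<Sum>\<alpha>\<in>E. lhs \<alpha> * mon \<alpha> x) = peval fc x + (\<Sum>i=1..m. lam i * peval (gc i) x)"
      unfolding lhs_eval by simp
    also have "\<dots> = (\<Sum>\<alpha>\<in>E. rhs \<alpha> * mon \<alpha> x)"
      using q pj E ident[of x] unfolding rhs_eval by (simp add: sum_square_coeffs_peval sum_square_coeffs_poly)
    finally show ?thesis .
  qed
  then have "(\<Sum>\<alpha>\<in>E. lhs \<alpha> * y \<alpha>) = (\<Sum>\<alpha>\<in>E. rhs \<alpha> * y \<alpha>)" by (rule mon_sum_eq_imp_moment_eq[OF E(1)])
  then show ?thesis unfolding lhs_eval rhs_eval .
qed

lemma moment_relaxation_lower_bound: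
  fixes fc :: "('n::finite \<Rightarrow> nat) \<Rightarrow> real" and gc :: "nat \<Rightarrow> ('n \<Rightarrow> nat) \<Rightarrow> real" and d :: "'n \<Rightarrow> nat"
  assumes feas: "feas_D m r d fc gc \<mu> lam \<sigma> \<sigma>s" and fy: "feas_Dt m r d gc y"
    and f_supp: "{\<alpha>. fc \<alpha> \<noteq> 0} \<subseteq> exps (2 * d0 d)"
    and g_supp: "\<forall>i\<in>{1..m}. {\<alpha>. gc i \<alpha> \<noteq> 0} \<subseteq> exps (2 * d0 d)"
    and rd: "r \<le> d0 d"
  shows "\<mu> \<le> obj_Dt d fc y"
proof -
  define E where "E = (exps (2 * d0 d) :: ('n \<Rightarrow> nat) set)"
  have "finite E" by (simp add: E_def)
  moreover have "exps (2 * r) \<subseteq> E" unfolding E_def by (rule exps_mono) (use rd in simp)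
  moreover have "(\<lambda>l. if l = j then e else 0) \<in> E" if "e \<le> 2 * d j" for j e
    unfolding E_def using that d_le_d0[of d j] by (intro unit_exp_in_exps) simp
  ultimately have E: "finite E" "exps (2 * r) \<subseteq> E" "\<And>j e. e \<le> 2 * d j \<Longrightarrow> (\<lambda>l. if l = j then e else 0) \<in> E"
    by blast+
  have sosm: "sos_mpoly r \<sigma>" and sosu: "\<forall>j. sos_upoly (d j) (\<sigma>s j)" using feas by (auto simp: feas_D_def)
  obtain K and q :: "nat \<Rightarrow> ('n \<Rightarrow> nat) \<Rightarrow> real" where q: "\<forall>k<K. mpoly_deg_le r (q k)" "\<forall>x. \<sigma> x = (\<Sum>k<K. (peval (q k) x)^2)"
    using sosm unfolding sos_mpoly_def by blast
  have "\<forall>j. \<exists>Kj (pj :: nat \<Rightarrow> real poly). (\<forall>k<Kj. degree (pj k) \<le> d j) \<and> \<sigma>s j = (\<Sum>k<Kj. (pj k)^2)"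
    using sosu unfolding sos_upoly_def by blast
  then obtain Kj and pj :: "'n \<Rightarrow> nat \<Rightarrow> real poly"
    where pj: "\<And>j. \<forall>k<Kj j. degree (pj j k) \<le> d j" "\<And>j. \<sigma>s j = (\<Sum>k<Kj j. (pj j k)^2)"
    by metis
  have identity: "peval fc x + (\<Sum>i=1..m. lam i * peval (gc i) x) - \<mu>
      = (\<Sum>k<K. (peval (q k) x)^2) + (\<Sum>j\<in>UNIV. \<Sum>k<Kj j. (poly (pj j k) (x$j))^2)" for x
    using feas q(2) pj(2) by (simp add: feas_D_def poly_sum)
  have "(\<Sum>i=1..m. lam i * (\<Sum>\<alpha>\<in>E. gc i \<alpha> * y \<alpha>)) \<le> 0"
    using feas fy by (intro sum_nonpos) (auto simp: feas_D_def feas_Dt_def E_def mult_nonneg_nonpos)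
  moreover have "0 \<le> (\<Sum>k<K. \<Sum>\<alpha>\<in>E. square_coeffs (exps r) (\<lambda>\<beta> \<gamma> l. \<beta> l + \<gamma> l) (q k) \<alpha> * y \<alpha>)"
    using fy E by (intro sum_nonneg moment_square_coeffs_nonneg) (auto simp: feas_Dt_def E_def exps_add mult_2)
  moreover have "0 \<le> (\<Sum>j\<in>UNIV. \<Sum>k<Kj j. \<Sum>\<alpha>\<in>E. square_coeffs {0..d j} (\<lambda>a b l. if l = j then a + b else 0) (coeff (pj j k)) \<alpha> * y \<alpha>)"
    using fy E by (intro sum_nonneg moment_square_coeffs_nonneg) (auto simp: feas_Dt_def E_def)
  moreover have "y (\<lambda>_. 0) = 1" using fy by (simp add: feas_Dt_def)
  ultimately have "\<mu> \<le> (\<Sum>\<alpha>\<in>E. fc \<alpha> * y \<alpha>)"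
    using moment_certificate_identity[OF E _ _ q(1) pj(1) identity, of y] f_supp g_supp by (simp add: E_def)
  then show ?thesis by (simp add: obj_Dt_def E_def)
qed

lemma moment_vector_feasible:
  fixes gc :: "nat \<Rightarrow> ('n::finite \<Rightarrow> nat) \<Rightarrow> real" and d :: "'n \<Rightarrow> nat"
  assumes g_supp: "\<forall>i\<in>{1..m}. {\<alpha>. gc i \<alpha> \<noteq> 0} \<subseteq> exps (2 * d0 d)"
    and rd: "r \<le> d0 d" and x: "x \<in> feas_CP m gc"
  shows "feas_Dt m r d gc (\<lambda>\<alpha>. mon \<alpha> x)"
proof -
  define E where "E = (exps (2 * d0 d) :: ('n \<Rightarrow> nat) set)"
  have E: "finite E" by (simp add: E_def)
  have "(\<Sum>\<alpha>\<in>E. gc i \<alpha> * mon \<alpha> x) \<le> 0" if "i \<in> {1..m}" for i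
  proof -
    have "(\<Sum>\<alpha>\<in>E. gc i \<alpha> * mon \<alpha> x) = peval (gc i) x"
      using peval_eq_sum_superset[OF E, of "gc i" x] g_supp that by (simp add: E_def)
    then show ?thesis using x that by (simp add: feas_CP_def)
  qed
  moreover have "psd_on {0..d j} (\<lambda>a b. \<Sum>\<alpha>\<in>E. mon \<alpha> x * (if \<alpha> = (\<lambda>k. if k = j then a + b else 0) then 1 else 0))" for j
  proof (rule psd_on_rank_one[where u = "\<lambda>a. (x$j)^a"])
    fix a b assume "a \<in> {0..d j}" "b \<in> {0..d j}"
    then have "(\<lambda>k. if k = j then a + b else 0) \<in> E"
      using d_le_d0[of d j] by (auto simp: E_def intro!: unit_exp_in_exps)
    then show "(\<Sum>\<alpha>\<in>E. mon \<alpha> x * (if \<alpha> = (\<lambda>k. if k = j then a + b else 0) then 1 else 0)) = (x$j)^a * (x$j)^b"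
      by (simp add: sum_indicator_eq[OF E] mon_unit_exp power_add)
  qed
  moreover have "psd_on (exps r) (\<lambda>\<beta> \<gamma>. \<Sum>\<alpha>\<in>E. mon \<alpha> x * (if \<alpha> = (\<lambda>k. \<beta> k + \<gamma> k) then 1 else 0))"
  proof (rule psd_on_rank_one[where u = "\<lambda>\<beta>. mon \<beta> x"])
    fix \<beta> \<gamma> :: "'n \<Rightarrow> nat" assume "\<beta> \<in> exps r" "\<gamma> \<in> exps r"
    then have "(\<lambda>k. \<beta> k + \<gamma> k) \<in> E"
      using exps_add exps_mono[of "r + r" "2 * d0 d"] rd by (fastforce simp: E_def)
    then show "(\<Sum>\<alpha>\<in>E. mon \<alpha> x * (if \<alpha> = (\<lambda>k. \<beta> k + \<gamma> k) then 1 else 0)) = mon \<beta> x * mon \<gamma> x"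
      by (simp add: sum_indicator_eq[OF E] mon_add)
  qed
  ultimately show ?thesis unfolding feas_Dt_def E_def by simp
qed

lemma moment_relaxation_value:
  fixes fc :: "('n::finite \<Rightarrow> nat) \<Rightarrow> real" and gc :: "nat \<Rightarrow> ('n \<Rightarrow> nat) \<Rightarrow> real" and d :: "'n \<Rightarrow> nat"
  assumes cert: "feas_D m r d fc gc (val_CP m fc gc) lam \<sigma> \<sigma>s"
    and f_supp: "{\<alpha>. fc \<alpha> \<noteq> 0} \<subseteq> exps (2 * d0 d)"
    and g_supp: "\<forall>i\<in>{1..m}. {\<alpha>. gc i \<alpha> \<noteq> 0} \<subseteq> exps (2 * d0 d)"
    and rd: "r \<le> d0 d" and F: "feas_CP m gc \<noteq> {}" and bdd: "bdd_below (peval fc ` feas_CP m gc)"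
  shows "{y. feas_Dt m r d gc y} \<noteq> {}"
    and "bdd_below (obj_Dt d fc ` {y. feas_Dt m r d gc y})"
    and "Inf (obj_Dt d fc ` {y. feas_Dt m r d gc y}) = val_CP m fc gc"
proof -
  have lower: "val_CP m fc gc \<le> obj_Dt d fc y" if "feas_Dt m r d gc y" for y
    by (rule moment_relaxation_lower_bound[OF cert that f_supp g_supp rd])
  have dirac: "obj_Dt d fc (\<lambda>\<alpha>. mon \<alpha> x) \<in> obj_Dt d fc ` {y. feas_Dt m r d gc y} \<and> obj_Dt d fc (\<lambda>\<alpha>. mon \<alpha> x) = peval fc x"
    if "x \<in> feas_CP m gc" for x
    using moment_vector_feasible[OF g_supp rd that] peval_eq_sum_superset[OF finite_exps f_supp]
    by (simp add: obj_Dt_def)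
  show "{y. feas_Dt m r d gc y} \<noteq> {}" using F dirac by blast
  show bdd_Dt: "bdd_below (obj_Dt d fc ` {y. feas_Dt m r d gc y})"
    using lower by (auto simp: bdd_below_def)
  have "Inf (obj_Dt d fc ` {y. feas_Dt m r d gc y}) \<le> peval fc x" if "x \<in> feas_CP m gc" for x
    using cInf_lower[OF _ bdd_Dt] dirac[OF that] by metis
  then have "Inf (obj_Dt d fc ` {y. feas_Dt m r d gc y}) \<le> val_CP m fc gc"
    unfolding val_CP_def using F by (intro cInf_greatest) auto
  moreover have "val_CP m fc gc \<le> Inf (obj_Dt d fc ` {y. feas_Dt m r d gc y})"
    using F dirac lower by (intro cInf_greatest) auto
  ultimately show "Inf (obj_Dt d fc ` {y. feas_Dt m r d gc y}) = val_CP m fc gc" by simp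
qed

section \<open>Strong duality\<close>

lemma weak_duality:
  fixes fc :: "('n::finite \<Rightarrow> nat) \<Rightarrow> real"
  assumes feas: "feas_D m r d fc gc \<mu> lam \<sigma> \<sigma>s" and F: "feas_CP m gc \<noteq> {}"
  shows "\<mu> \<le> val_CP m fc gc"
  unfolding val_CP_def
proof (rule cInf_greatest)
  show "peval fc ` feas_CP m gc \<noteq> {}" using F by simp
  fix z assume "z \<in> peval fc ` feas_CP m gc"
  then obtain x where x: "x \<in> feas_CP m gc" "z = peval fc x" by blast
  obtain K and q :: "nat \<Rightarrow> ('n \<Rightarrow> nat) \<Rightarrow> real" where "\<forall>x. \<sigma> x = (\<Sum>k<K. (peval (q k) x)^2)"
    using feas unfolding feas_D_def sos_mpoly_def by blast
  then have "0 \<le> \<sigma> x" by (simp add: sum_nonneg)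
  moreover have "0 \<le> poly (\<sigma>s j) t" for j t
  proof -
    obtain K and q :: "nat \<Rightarrow> real poly" where "\<sigma>s j = (\<Sum>k<K. (q k)^2)"
      using feas unfolding feas_D_def sos_upoly_def by blast
    then show ?thesis by (simp add: poly_sum sum_nonneg)
  qed
  then have "0 \<le> (\<Sum>j\<in>UNIV. poly (\<sigma>s j) (x $ j))" by (simp add: sum_nonneg)
  moreover have "(\<Sum>i=1..m. lam i * peval (gc i) x) \<le> 0"
    using x(1) feas by (intro sum_nonpos) (auto simp: feas_CP_def feas_D_def mult_nonneg_nonpos)
  moreover have "peval fc x + (\<Sum>i=1..m. lam i * peval (gc i) x) - \<mu> = \<sigma> x + (\<Sum>j\<in>UNIV. poly (\<sigma>s j) (x $ j))"
    using feas by (simp add: feas_D_def)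
  ultimately show "\<mu> \<le> z" using x(2) by linarith
qed

lemma convex_poly_tangent_gap_sos:
  fixes w :: "real poly"
  assumes conv: "convex_on UNIV (poly w)" and deg: "degree w \<le> 2 * D"
  shows "sos_upoly D (w - [:poly w a:] - smult (poly (pderiv w) a) [:-a, 1:])" (is "sos_upoly D ?g")
proof -
  have "poly (pderiv w) a * (t - a) \<le> poly w t - poly w a" for t
    by (rule convex_on_imp_above_tangent[OF conv]) (auto intro: poly_DERIV)
  then have "0 \<le> poly ?g t" for t by (simp add: algebra_simps)
  then have "sos_poly (degree ?g div 2) ?g" by (rule nonneg_poly_sos_poly)
  moreover have "degree ?g \<le> 2 * D"
  proof (cases "D = 0")
    case True
    then have "pderiv w = 0" using deg by (simp add: pderiv_eq_0_iff)
    then show ?thesis using deg by (simp add: degree_diff_le)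
  next
    case False
    then have "degree (smult (poly (pderiv w) a) [:-a, 1:]) \<le> 2 * D"
      using degree_smult_le[of "poly (pderiv w) a" "[:-a, 1:]"] by simp
    then show ?thesis using deg by (intro degree_diff_le) auto
  qed
  ultimately show ?thesis by (intro sos_poly_imp_sos_upoly) (auto elim: sos_poly_mono)
qed

locale spld_problem =
  fixes m r :: nat
    and d :: "'n::finite \<Rightarrow> nat"
    and fc :: "('n \<Rightarrow> nat) \<Rightarrow> real"
    and gc :: "nat \<Rightarrow> ('n \<Rightarrow> nat) \<Rightarrow> real"
    and u :: "nat \<Rightarrow> 'n \<Rightarrow> real poly"
    and pc :: "nat \<Rightarrow> ('n \<Rightarrow> nat) \<Rightarrow> real"
  assumes f_poly: "is_mpoly fc"
    and g_poly: "\<forall>i\<in>{1..m}. is_mpoly (gc i)"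
    and f_convex: "convex_on UNIV (peval fc)"
    and g_convex: "\<forall>i\<in>{1..m}. convex_on UNIV (peval (gc i))"
    and u_deg: "\<forall>i\<le>m. \<forall>j. degree (u i j) \<le> 2 * d j"
    and u_convex: "\<forall>i\<le>m. \<forall>j. convex_on UNIV (poly (u i j))"
    and p_poly: "\<forall>i\<le>m. is_mpoly (pc i)"
    and p_deg: "\<forall>i\<le>m. mpoly_deg_le (2 * r) (pc i)"
    and p_sosconvex: "\<forall>i\<le>m. sos_convex (pc i)"
    and f_decomp: "\<forall>x. peval fc x = (\<Sum>j\<in>UNIV. poly (u 0 j) (x $ j)) + peval (pc 0) x"
    and g_decomp: "\<forall>i\<in>{1..m}. \<forall>x.
                     peval (gc i) x = (\<Sum>j\<in>UNIV. poly (u i j) (x $ j)) + peval (pc i) x"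
    and d0_gt: "d0 d > r"
begin

lemma r_le_d0: "r \<le> d0 d"
  using d0_gt by simp

lemma poly_fun_decomp:
  assumes "i \<le> m"
  shows "poly_fun (2 * d0 d) (\<lambda>x. (\<Sum>j\<in>UNIV. poly (u i j) (x $ j)) + peval (pc i) x)"
proof (intro poly_fun_add poly_fun_sum poly_fun_upoly poly_fun_peval)
  show "degree (u i j) \<le> 2 * d0 d" for j using u_deg assms d_le_d0[of d j] by (meson mult_le_mono2 order_trans)
  show "mpoly_deg_le (2 * d0 d) (pc i)" using p_deg assms r_le_d0 by (auto intro: mpoly_deg_le_mono)
qed simp

lemma poly_fun_f: "poly_fun (2 * d0 d) (peval fc)"
  using poly_fun_decomp[of 0] f_decomp by (simp add: poly_fun_cong)

lemma poly_fun_g: "i \<in> {1..m} \<Longrightarrow> poly_fun (2 * d0 d) (peval (gc i))"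
  using poly_fun_decomp[of i] g_decomp by (simp add: poly_fun_cong)

lemma f_support: "{\<alpha>. fc \<alpha> \<noteq> 0} \<subseteq> exps (2 * d0 d)"
  by (rule poly_fun_peval_support[OF f_poly poly_fun_f])

lemma g_support: "\<forall>i\<in>{1..m}. {\<alpha>. gc i \<alpha> \<noteq> 0} \<subseteq> exps (2 * d0 d)"
  using poly_fun_peval_support g_poly poly_fun_g by blast

definition lagrangian :: "(nat \<Rightarrow> real) \<Rightarrow> real^'n \<Rightarrow> real" where
  "lagrangian lam x = peval fc x + (\<Sum>i=1..m. lam i * peval (gc i) x)"

definition lagrangian_upoly :: "(nat \<Rightarrow> real) \<Rightarrow> 'n \<Rightarrow> real poly" where
  "lagrangian_upoly lam j = u 0 j + (\<Sum>i=1..m. smult (lam i) (u i j))"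

definition lagrangian_sosconvex :: "(nat \<Rightarrow> real) \<Rightarrow> real^'n \<Rightarrow> real" where
  "lagrangian_sosconvex lam x = peval (pc 0) x + (\<Sum>i=1..m. lam i * peval (pc i) x)"

lemma lagrangian_decomp:
  "lagrangian lam x = (\<Sum>j\<in>UNIV. poly (lagrangian_upoly lam j) (x $ j)) + lagrangian_sosconvex lam x"
proof -
  have "(\<Sum>i=1..m. lam i * peval (gc i) x)
      = (\<Sum>i=1..m. lam i * (\<Sum>j\<in>UNIV. poly (u i j) (x $ j)) + lam i * peval (pc i) x)"
    by (intro sum.cong refl) (simp add: g_decomp distrib_left)
  moreover have "(\<Sum>j\<in>UNIV. \<Sum>i=1..m. lam i * poly (u i j) (x $ j)) = (\<Sum>i=1..m. lam i * (\<Sum>j\<in>UNIV. poly (u i j) (x $ j)))"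
    by (simp add: sum_distrib_left) (rule sum.swap)
  ultimately show ?thesis
    using f_decomp by (simp add: lagrangian_def lagrangian_upoly_def lagrangian_sosconvex_def poly_sum sum.distrib)
qed

lemma poly_fun_lagrangian: "poly_fun (2 * d0 d) (lagrangian lam)"
  unfolding lagrangian_def[abs_def] by (intro poly_fun_add poly_fun_f poly_fun_sum poly_fun_cmult poly_fun_g) auto

lemma convex_lagrangian: "\<forall>i\<in>{1..m}. 0 \<le> lam i \<Longrightarrow> convex_on UNIV (lagrangian lam)"
  unfolding lagrangian_def[abs_def] using g_convex
  by (intro convex_on_add f_convex convex_on_nonneg_weighted_sum) auto

lemma lagrangian_stationary:
  assumes ymin: "\<And>x. lagrangian lam y \<le> lagrangian lam x"
  shows "(\<Sum>j\<in>UNIV. (x$j - y$j) * poly (pderiv (lagrangian_upoly lam j)) (y$j))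
      + (\<Sum>k\<in>UNIV. (x$k - y$k) * peval (pdiff k (pc 0)) y)
      + (\<Sum>i=1..m. lam i * (\<Sum>k\<in>UNIV. (x$k - y$k) * peval (pdiff k (pc i)) y)) = 0"
proof -
  define v where "v = x - y"
  have "DERIV (\<lambda>s. (\<Sum>j\<in>UNIV. poly (lagrangian_upoly lam j) (y$j + s * v$j))
      + (peval (pc 0) (y + s *\<^sub>R v) + (\<Sum>i=1..m. lam i * peval (pc i) (y + s *\<^sub>R v)))) 0
    :> (\<Sum>j\<in>UNIV. poly (pderiv (lagrangian_upoly lam j)) (y$j + 0 * v$j) * v$j)
      + ((\<Sum>k\<in>UNIV. v$k * peval (pdiff k (pc 0)) (y + 0 *\<^sub>R v))
      + (\<Sum>i=1..m. lam i * (\<Sum>k\<in>UNIV. v$k * peval (pdiff k (pc i)) (y + 0 *\<^sub>R v))))"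
    using p_poly
    by (intro DERIV_add DERIV_sum DERIV_cmult peval_line_deriv DERIV_chain2[OF poly_DERIV])
       (auto intro!: derivative_eq_intros)
  then have "DERIV (\<lambda>s. lagrangian lam (y + s *\<^sub>R v)) 0
    :> (\<Sum>j\<in>UNIV. poly (pderiv (lagrangian_upoly lam j)) (y$j) * v$j)
      + ((\<Sum>k\<in>UNIV. v$k * peval (pdiff k (pc 0)) y)
      + (\<Sum>i=1..m. lam i * (\<Sum>k\<in>UNIV. v$k * peval (pdiff k (pc i)) y)))"
    by (simp add: lagrangian_decomp lagrangian_sosconvex_def)
  from DERIV_local_min[OF this, of 1] ymin show ?thesis by (simp add: v_def mult.commute add.assoc)
qed

lemma lagrangian_certificate:
  assumes lam0: "\<forall>i\<in>{1..m}. 0 \<le> lam i" and ymin: "\<And>x. lagrangian lam y \<le> lagrangian lam x"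
    and lb: "\<mu> \<le> lagrangian lam y"
  shows "\<exists>\<sigma> \<sigma>s. feas_D m r d fc gc \<mu> lam \<sigma> \<sigma>s"
proof -
  define w where "w = lagrangian_upoly lam"
  define \<sigma>s where "\<sigma>s = (\<lambda>j. w j - [:poly (w j) (y$j):] - smult (poly (pderiv (w j)) (y$j)) [:- (y$j), 1:])"
  have \<sigma>s_sos: "sos_upoly (d j) (\<sigma>s j)" for j
    unfolding \<sigma>s_def
  proof (rule convex_poly_tangent_gap_sos)
    have "poly (w j) = (\<lambda>t. poly (u 0 j) t + (\<Sum>i=1..m. lam i * poly (u i j) t))"
      by (simp add: w_def lagrangian_upoly_def poly_sum fun_eq_iff)
    then show "convex_on UNIV (poly (w j))"
      using u_convex lam0 by (simp, intro convex_on_add convex_on_nonneg_weighted_sum) auto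
    show "degree (w j) \<le> 2 * d j"
      unfolding w_def lagrangian_upoly_def using u_deg
      by (intro degree_add_le degree_sum_le) (auto intro: order_trans[OF degree_smult_le])
  qed
  define S where "S = (\<lambda>i x. peval (pc i) x - peval (pc i) y - (\<Sum>k\<in>UNIV. (x$k - y$k) * peval (pdiff k (pc i)) y))"
  define \<sigma> where "\<sigma> = (\<lambda>x. S 0 x + (\<Sum>i=1..m. lam i * S i x) + (lagrangian lam y - \<mu>))"
  have "sos_fun r (S i)" if "i \<le> m" for i
    unfolding S_def using p_poly p_deg p_sosconvex that by (intro sos_convex_tangent_gap_sos) auto
  then have "sos_fun r \<sigma>"
    unfolding \<sigma>_def using lam0 lb by (intro sos_fun_add sos_fun_sum sos_fun_cmult sos_fun_const) auto
  moreover have "lagrangian lam x - \<mu> = \<sigma> x + (\<Sum>j\<in>UNIV. poly (\<sigma>s j) (x $ j))" for x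
  proof -
    have "(\<Sum>i=1..m. lam i * S i x) = (\<Sum>i=1..m. lam i * peval (pc i) x) - (\<Sum>i=1..m. lam i * peval (pc i) y)
       - (\<Sum>i=1..m. lam i * (\<Sum>k\<in>UNIV. (x$k - y$k) * peval (pdiff k (pc i)) y))"
      by (simp add: S_def right_diff_distrib sum_subtractf)
    moreover have "(\<Sum>j\<in>UNIV. poly (\<sigma>s j) (x $ j)) = (\<Sum>j\<in>UNIV. poly (w j) (x$j)) - (\<Sum>j\<in>UNIV. poly (w j) (y$j))
       - (\<Sum>j\<in>UNIV. (x$j - y$j) * poly (pderiv (w j)) (y$j))"
      by (simp add: \<sigma>s_def algebra_simps sum_subtractf sum.distrib)
    ultimately show ?thesis
      using lagrangian_stationary[OF ymin, of x] lagrangian_decomp[of lam x] lagrangian_decomp[of lam y]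
      by (simp add: \<sigma>_def S_def w_def lagrangian_sosconvex_def)
  qed
  ultimately show ?thesis
    using lam0 \<sigma>s_sos sos_fun_sos_mpoly unfolding feas_D_def lagrangian_def by blast
qed

end

theorem theorem4:
  fixes m r :: nat
    and d :: "'n::finite \<Rightarrow> nat"
    and fc :: "('n \<Rightarrow> nat) \<Rightarrow> real"
    and gc :: "nat \<Rightarrow> ('n \<Rightarrow> nat) \<Rightarrow> real"
    and u :: "nat \<Rightarrow> 'n \<Rightarrow> real poly"
    and pc :: "nat \<Rightarrow> ('n \<Rightarrow> nat) \<Rightarrow> real"
  assumes f_poly: "is_mpoly fc"
    and g_poly: "\<forall>i\<in>{1..m}. is_mpoly (gc i)"
    and f_convex: "convex_on UNIV (peval fc)"
    and g_convex: "\<forall>i\<in>{1..m}. convex_on UNIV (peval (gc i))"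
    and u_deg: "\<forall>i\<le>m. \<forall>j. degree (u i j) \<le> 2 * d j"
    and u_convex: "\<forall>i\<le>m. \<forall>j. convex_on UNIV (poly (u i j))"
    and p_poly: "\<forall>i\<le>m. is_mpoly (pc i)"
    and p_deg: "\<forall>i\<le>m. mpoly_deg_le (2 * r) (pc i)"
    and p_sosconvex: "\<forall>i\<le>m. sos_convex (pc i)"
    and f_decomp: "\<forall>x. peval fc x = (\<Sum>j\<in>UNIV. poly (u 0 j) (x $ j)) + peval (pc 0) x"
    and g_decomp: "\<forall>i\<in>{1..m}. \<forall>x.
                     peval (gc i) x = (\<Sum>j\<in>UNIV. poly (u i j) (x $ j)) + peval (pc i) x"
    and d0_gt: "d0 d > r"
    and bdd: "bdd_below (peval fc ` feas_CP m gc)"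
    and slater: "\<exists>xh\<in>feas_CP m gc. \<forall>i\<in>{1..m}. peval (gc i) xh < 0"
  shows "(\<exists>lam \<sigma> \<sigma>s. feas_D m r d fc gc (val_CP m fc gc) lam \<sigma> \<sigma>s)
       \<and> (\<forall>\<mu> lam \<sigma> \<sigma>s. feas_D m r d fc gc \<mu> lam \<sigma> \<sigma>s \<longrightarrow> \<mu> \<le> val_CP m fc gc)
       \<and> {y. feas_Dt m r d gc y} \<noteq> {}
       \<and> bdd_below (obj_Dt d fc ` {y. feas_Dt m r d gc y})
       \<and> Inf (obj_Dt d fc ` {y. feas_Dt m r d gc y}) = val_CP m fc gc"
proof -
  interpret spld_problem m r d fc gc u pc
    by (rule spld_problem.intro) fact+
  obtain xh where xh: "xh \<in> feas_CP m gc" "\<forall>i\<in>{1..m}. peval (gc i) xh < 0" using slater by blast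
  then have F: "feas_CP m gc \<noteq> {}" by blast
  have "\<forall>x\<in>UNIV. (\<forall>i\<in>{1..m}. peval (gc i) x \<le> 0) \<longrightarrow> val_CP m fc gc \<le> peval fc x"
    using bdd by (auto simp: val_CP_def feas_CP_def intro: cInf_lower)
  then have "\<exists>lam. (\<forall>i\<in>{1..m}. 0 \<le> lam i) \<and> (\<forall>x\<in>UNIV. val_CP m fc gc \<le> lagrangian lam x)"
    unfolding lagrangian_def using f_convex g_convex xh by (intro convex_lagrange_multipliers) auto
  then obtain lam where lam0: "\<forall>i\<in>{1..m}. 0 \<le> lam i" and lam_lb: "\<And>x. val_CP m fc gc \<le> lagrangian lam x"
    by blast
  obtain y where "\<And>x. lagrangian lam y \<le> lagrangian lam x"
    using convex_poly_fun_attains_min[OF poly_fun_lagrangian convex_lagrangian[OF lam0] lam_lb] by blast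
  with lam0 lam_lb obtain \<sigma> \<sigma>s where cert: "feas_D m r d fc gc (val_CP m fc gc) lam \<sigma> \<sigma>s"
    using lagrangian_certificate by blast
  show ?thesis
    using cert weak_duality[OF _ F] moment_relaxation_value[OF cert f_support g_support r_le_d0 F bdd] by blast
qed

end
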